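(* Let $f$ be a probability distribution on $\mathcal{X}=\{0,1\}^p$ with $f(\gamma)>0$ for all $\gamma$, and let $P_{TGS}$ be the Tempered Gibbs Sampler kernel below, with $Z(\gamma)=\frac1p\sum_{i=1}^p p_i(\gamma)$. Define the matrix $Q_{TGS}$ on $\mathcal{X}$ by $Q_{TGS}(\gamma,\gamma')=Z(\gamma)P_{TGS}(\gamma,\gamma')$ for $\gamma'\ne\gamma$ and $Q_{TGS}(\gamma,\gamma)=-\sum_{\gamma'\ne\gamma}Q_{TGS}(\gamma,\gamma')$. Then for every $h:\mathcal{X}\to\mathbb{R}$, $$\mathrm{var}(h,TGS)\le\frac{2\,\mathrm{var}_f(h)}{\mathrm{Gap}(Q_{TGS})},$$ where $\mathrm{Gap}(Q_{TGS})$ is the smallest non-zero eigenvalue of $-Q_{TGS}$.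
   Context: TGS kernel on $\{0,1\}^p$: with $p_i(\gamma)=\frac{1}{2f(\gamma_i|\gamma_{-i})}$, where $f(\gamma_i|\gamma_{-i})$ is the conditional probability under $f$ that coordinate $i$ takes its current value given the others, from $\gamma$ sample $i$ with probability $p_i(\gamma)/\sum_j p_j(\gamma)$ and move to the state obtained by switching $\gamma_i$ to $1-\gamma_i$. The TGS estimator of $\mathbb{E}_f[h]$ is $\hat h_n^{TGS}=\sum_{t=1}^n Z(\gamma^{(t)})^{-1}h(\gamma^{(t)})/\sum_{t=1}^n Z(\gamma^{(t)})^{-1}$ and $\mathrm{var}(h,TGS)=\lim_n n\,\mathrm{var}(\hat h_n^{TGS})$; $\mathrm{var}_f(h)=\mathbb{E}_f[h^2]-\mathbb{E}_f[h]^2$. *)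

theory Defs
  imports Complex_Main
begin

definition states :: "nat \<Rightarrow> bool list set" where
  "states p = {xs. length xs = p}"

definition flip :: "bool list \<Rightarrow> nat \<Rightarrow> bool list" where
  "flip g i = g[i := \<not> g ! i]"

definition cond_prob :: "(bool list \<Rightarrow> real) \<Rightarrow> bool list \<Rightarrow> nat \<Rightarrow> real" where
  "cond_prob f g i = f g / (f g + f (flip g i))"

definition tgs_pi :: "(bool list \<Rightarrow> real) \<Rightarrow> bool list \<Rightarrow> nat \<Rightarrow> real" where
  "tgs_pi f g i = 1 / (2 * cond_prob f g i)"

definition tgs_Z :: "nat \<Rightarrow> (bool list \<Rightarrow> real) \<Rightarrow> bool list \<Rightarrow> real" where
  "tgs_Z p f g = (1 / real p) * (\<Sum>i<p. tgs_pi f g i)"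

definition tgs_P :: "nat \<Rightarrow> (bool list \<Rightarrow> real) \<Rightarrow> bool list \<Rightarrow> bool list \<Rightarrow> real" where
  "tgs_P p f g g' =
     (\<Sum>i\<in>{i. i < p \<and> flip g i = g'}. tgs_pi f g i / (\<Sum>j<p. tgs_pi f g j))"

definition tgs_Q :: "nat \<Rightarrow> (bool list \<Rightarrow> real) \<Rightarrow> bool list \<Rightarrow> bool list \<Rightarrow> real" where
  "tgs_Q p f g g' =
     (if g' \<noteq> g then tgs_Z p f g * tgs_P p f g g'
      else - (\<Sum>g''\<in>states p - {g}. tgs_Z p f g * tgs_P p f g g''))"

text \<open>Gap(Q): smallest non-zero eigenvalue of -Q (Q is reversible w.r.t. f, so its
  spectrum is real and real eigenvectors suffice).\<close>
definition eigenvalues_negQ :: "nat \<Rightarrow> (bool list \<Rightarrow> real) \<Rightarrow> real set" where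
  "eigenvalues_negQ p f = {lam. \<exists>v. (\<exists>x\<in>states p. v x \<noteq> 0) \<and>
       (\<forall>x\<in>states p. - (\<Sum>y\<in>states p. tgs_Q p f x y * v y) = lam * v x)}"

definition gap :: "nat \<Rightarrow> (bool list \<Rightarrow> real) \<Rightarrow> real" where
  "gap p f = Min (eigenvalues_negQ p f - {0})"

definition tgs_stat :: "nat \<Rightarrow> (bool list \<Rightarrow> real) \<Rightarrow> bool list \<Rightarrow> real" where
  "tgs_stat p f g = f g * tgs_Z p f g / (\<Sum>g'\<in>states p. f g' * tgs_Z p f g')"

definition path_prob :: "nat \<Rightarrow> (bool list \<Rightarrow> real) \<Rightarrow> bool list list \<Rightarrow> real" where
  "path_prob p f ps = tgs_stat p f (ps ! 0) *
      (\<Prod>t<length ps - 1. tgs_P p f (ps ! t) (ps ! Suc t))"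

definition paths :: "nat \<Rightarrow> nat \<Rightarrow> bool list list set" where
  "paths p n = {ps. length ps = n \<and> set ps \<subseteq> states p}"

definition path_expect :: "nat \<Rightarrow> (bool list \<Rightarrow> real) \<Rightarrow> nat \<Rightarrow> (bool list list \<Rightarrow> real) \<Rightarrow> real" where
  "path_expect p f n F = (\<Sum>ps\<in>paths p n. path_prob p f ps * F ps)"

definition tgs_est :: "nat \<Rightarrow> (bool list \<Rightarrow> real) \<Rightarrow> (bool list \<Rightarrow> real) \<Rightarrow> bool list list \<Rightarrow> real" where
  "tgs_est p f h ps =
     (\<Sum>t<length ps. h (ps ! t) / tgs_Z p f (ps ! t)) / (\<Sum>t<length ps. 1 / tgs_Z p f (ps ! t))"

definition tgs_est_var :: "nat \<Rightarrow> (bool list \<Rightarrow> real) \<Rightarrow> (bool list \<Rightarrow> real) \<Rightarrow> nat \<Rightarrow> real" where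
  "tgs_est_var p f h n =
     path_expect p f n (\<lambda>ps. (tgs_est p f h ps)\<^sup>2) - (path_expect p f n (tgs_est p f h))\<^sup>2"

definition tgs_asym_var :: "nat \<Rightarrow> (bool list \<Rightarrow> real) \<Rightarrow> (bool list \<Rightarrow> real) \<Rightarrow> real" where
  "tgs_asym_var p f h = lim (\<lambda>n. real n * tgs_est_var p f h n)"

definition var_f :: "nat \<Rightarrow> (bool list \<Rightarrow> real) \<Rightarrow> (bool list \<Rightarrow> real) \<Rightarrow> real" where
  "var_f p f h = (\<Sum>g\<in>states p. f g * (h g)\<^sup>2) - (\<Sum>g\<in>states p. f g * h g)\<^sup>2"

end

theory Submission
  imports Defs "HOL-Analysis.Analysis" "Jordan_Normal_Form.Char_Poly"
begin

(*
  The flux f x * p_i(x) = (f x + f (flip x i)) / 2 through an edge of the hypercube is symmetric in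
  its two endpoints. Hence f Z is stationary for P, and -Q = Z (I - P) is self-adjoint in L^2(f)
  with Dirichlet form D(v, v) = (1/2p) sum_i sum_x (f x + f (flip x i)) / 2 * (v x - v (flip x i))^2.
  Minimising the Rayleigh quotient D(v, v) / var_f v over a compact set produces the smallest
  non-zero eigenvalue lam = Gap(Q_TGS) together with the Poincare inequality lam var_f v <= D(v, v);
  the same variational argument solves the Poisson equation -Q u = h - E_f h.

  Along a stationary path the weighted errors sum_t (h - E_f h) / Z = sum_t (u - P u) split into a
  bounded boundary term and a martingale with increments u(x_t) - P u(x_(t-1)); the denominator
  sum_t 1 / Z is treated alike with a second Poisson solution. Second and fourth moment bounds then
  give n var(hat h_n) -> sigma^2, the stationary mean of the one-step conditional variance of u.
  Finally sigma^2 <= 2 D(u, u) = 2 <h - E_f h, u>_f <= 2 var_f h / lam by the Poincare inequality.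
*)

lemma square_sum_le: "((a::real) + b)^2 \<le> 2 * (a^2 + b^2)"
  using sum_squares_bound[of a b] by (simp add: power2_eq_square algebra_simps)

lemma power4_sum_le: "((a::real) + b)^4 \<le> 8 * (a^4 + b^4)"
proof -
  have "(a + b)^4 = ((a + b)^2)^2" by simp
  also have "\<dots> \<le> (2 * (a^2 + b^2))^2"
    using square_sum_le by (intro power_mono) auto
  also have "\<dots> \<le> 8 * (a^4 + b^4)"
    using sum_squares_bound[of "a^2" "b^2"] by (simp add: power2_eq_square power4_eq_xxxx algebra_simps)
  finally show ?thesis .
qed

lemma abs_mult_le_weighted_squares:
  fixes F G t :: real
  assumes "0 < t"
  shows "\<bar>F * G\<bar> \<le> 1 / (2 * t) * F^2 + t / 2 * G^2"
proof -
  have "0 \<le> (\<bar>F\<bar> - t * \<bar>G\<bar>)^2" by simp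
  hence "2 * t * \<bar>F * G\<bar> \<le> F^2 + t^2 * G^2"
    by (simp add: power2_eq_square abs_mult algebra_simps)
  with assms show ?thesis
    by (simp add: field_simps power2_eq_square)
qed

lemma linear_coeff_eq_0_if_quadratic_nonneg:
  fixes a b :: real
  assumes "\<And>t. 0 \<le> a * t + b * t^2"
  shows "a = 0"
proof (rule ccontr)
  assume "a \<noteq> 0"
  define B where "B = \<bar>b\<bar> + 1"
  have B: "0 < B" "b \<le> B" by (auto simp: B_def)
  define t where "t = - a / (2 * B)"
  have "a * t + b * t^2 \<le> a * t + B * t^2"
    using B by (intro add_left_mono mult_right_mono) auto
  also have "\<dots> = - (a * a) / (4 * B)"
    using B by (simp add: t_def power2_eq_square field_simps)
  also have "\<dots> < 0"
    using B \<open>a \<noteq> 0\<close> by (intro divide_neg_pos) (auto simp: zero_less_mult_iff)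
  finally show False using assms[of t] by simp
qed

lemma weighted_average_le:
  fixes w g :: "'a \<Rightarrow> real"
  assumes "\<And>x. x \<in> A \<Longrightarrow> 0 \<le> w x" "(\<Sum>x\<in>A. w x) = 1" "\<And>x. x \<in> A \<Longrightarrow> g x \<le> c"
  shows "(\<Sum>x\<in>A. w x * g x) \<le> c"
proof -
  have "(\<Sum>x\<in>A. w x * g x) \<le> (\<Sum>x\<in>A. w x * c)"
    using assms by (intro sum_mono mult_left_mono) auto
  thus ?thesis by (simp add: assms(2) flip: sum_distrib_right)
qed

lemma weighted_fourth_moment_le:
  fixes w d :: "'a \<Rightarrow> real" and M K :: real
  assumes w: "\<And>x. x \<in> A \<Longrightarrow> 0 \<le> w x" and sum_w: "(\<Sum>x\<in>A. w x) = 1"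
    and centred: "(\<Sum>x\<in>A. w x * d x) = 0" and d: "\<And>x. x \<in> A \<Longrightarrow> \<bar>d x\<bar> \<le> K"
  shows "(\<Sum>x\<in>A. w x * (M + d x)^4) \<le> M^4 + (6 * K^2 + 2 * K^3) * M^2 + 2 * K^3 + K^4"
proof -
  have average_le: "(\<Sum>x\<in>A. w x * g x) \<le> c" if "\<And>x. x \<in> A \<Longrightarrow> g x \<le> c" for g c
    using weighted_average_le[OF w sum_w that] .
  have "A \<noteq> {}" using sum_w by auto
  then obtain x0 where "x0 \<in> A" by blast
  hence "0 \<le> K" using d[of x0] by linarith
  have d_pow: "\<bar>d x\<bar>^k \<le> K^k" if "x \<in> A" for x k
    using d[OF that] by (intro power_mono) auto
  have "(d x)^2 \<le> K^2" if "x \<in> A" for x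
    using d[OF that] \<open>0 \<le> K\<close> abs_le_square_iff[of "d x" K] by simp
  hence d2: "(\<Sum>x\<in>A. w x * (d x)^2) \<le> K^2" by (rule average_le)
  have d3: "\<bar>\<Sum>x\<in>A. w x * (d x)^3\<bar> \<le> K^3"
  proof -
    have "\<bar>\<Sum>x\<in>A. w x * (d x)^3\<bar> \<le> (\<Sum>x\<in>A. w x * \<bar>d x\<bar>^3)"
      using sum_abs[of "\<lambda>x. w x * (d x)^3" A] w by (simp add: abs_mult power_abs)
    also have "\<dots> \<le> K^3"
      using d_pow by (intro average_le) auto
    finally show ?thesis .
  qed
  have d4: "(\<Sum>x\<in>A. w x * (d x)^4) \<le> K^4"
    using d_pow[of _ 4] by (intro average_le) (simp add: power_even_abs)
  have "(\<Sum>x\<in>A. w x * (M + d x)^4) = M^4 + 6 * M^2 * (\<Sum>x\<in>A. w x * (d x)^2)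
      + 4 * M * (\<Sum>x\<in>A. w x * (d x)^3) + (\<Sum>x\<in>A. w x * (d x)^4)"
  proof -
    have "(\<Sum>x\<in>A. w x * (M + d x)^4) = (\<Sum>x\<in>A. M^4 * w x + 4 * M^3 * (w x * d x)
        + 6 * M^2 * (w x * (d x)^2) + 4 * M * (w x * (d x)^3) + w x * (d x)^4)"
      by (intro sum.cong refl) (simp add: eval_nat_numeral algebra_simps)
    also have "\<dots> = M^4 * (\<Sum>x\<in>A. w x) + 4 * M^3 * (\<Sum>x\<in>A. w x * d x)
        + 6 * M^2 * (\<Sum>x\<in>A. w x * (d x)^2) + 4 * M * (\<Sum>x\<in>A. w x * (d x)^3)
        + (\<Sum>x\<in>A. w x * (d x)^4)"
      by (simp add: sum.distrib sum_distrib_left)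
    finally show ?thesis using sum_w centred by simp
  qed
  moreover have "4 * M * (\<Sum>x\<in>A. w x * (d x)^3) \<le> 2 * K^3 * (1 + M^2)"
  proof -
    have "M * (\<Sum>x\<in>A. w x * (d x)^3) \<le> \<bar>M\<bar> * \<bar>\<Sum>x\<in>A. w x * (d x)^3\<bar>"
      by (simp add: abs_mult[symmetric])
    also have "\<dots> \<le> \<bar>M\<bar> * K^3"
      using d3 by (intro mult_left_mono) auto
    finally have "4 * M * (\<Sum>x\<in>A. w x * (d x)^3) \<le> 4 * \<bar>M\<bar> * K^3"
      by simp
    moreover have "K^3 * (2 * \<bar>M\<bar>) \<le> K^3 * (1 + M^2)"
      using sum_squares_bound[of "\<bar>M\<bar>" 1] \<open>0 \<le> K\<close>
      by (intro mult_left_mono) (auto simp: power2_eq_square)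
    ultimately show ?thesis by (simp add: algebra_simps)
  qed
  moreover have "6 * M^2 * (\<Sum>x\<in>A. w x * (d x)^2) \<le> 6 * M^2 * K^2"
    using d2 by (intro mult_left_mono) auto
  ultimately show ?thesis
    using d4 by (simp add: algebra_simps)
qed

lemma abs_scaled_square_ratio_diff_le:
  fixes m z b x :: real
  assumes m: "0 < m" and z: "0 < z" and b_lower: "m / z \<le> b" and b_upper: "b \<le> 2 * m"
  shows "\<bar>m * (x / b)^2 - x^2 / m\<bar> \<le> 3 * z^2 * \<bar>x^2 * (b - m)\<bar> / m^2"
proof -
  have b: "0 < b" using divide_pos_pos[OF m z] b_lower by linarith
  have "m * (x / b)^2 - x^2 / m = x^2 * (m - b) * (m + b) / (m * b^2)"
    using m b by (simp add: power2_eq_square field_simps)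
  hence "\<bar>m * (x / b)^2 - x^2 / m\<bar> = \<bar>x^2 * (b - m)\<bar> * (m + b) / (m * b^2)"
    using m b by (simp add: abs_mult abs_divide abs_minus_commute)
  also have "\<dots> \<le> \<bar>x^2 * (b - m)\<bar> * (3 * m) / (m * b^2)"
    using m b b_upper by (intro divide_right_mono mult_left_mono) auto
  also have "\<dots> = 3 * \<bar>x^2 * (b - m)\<bar> / b^2"
    using m by simp
  also have "\<dots> \<le> 3 * \<bar>x^2 * (b - m)\<bar> / (m / z)^2"
    using b_lower m z b by (intro divide_left_mono power_mono) auto
  finally show ?thesis
    using z by (simp add: power_divide field_simps)
qed

lemma abs_ratio_diff_le:
  fixes m z b x :: real
  assumes m: "0 < m" and z: "0 < z" and b_lower: "m / z \<le> b"
  shows "\<bar>x / b - x / m\<bar> \<le> z * \<bar>x * (b - m)\<bar> / m^2"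
proof -
  have b: "0 < b" using divide_pos_pos[OF m z] b_lower by linarith
  have "\<bar>x / b - x / m\<bar> = \<bar>x * (b - m)\<bar> / (m * b)"
    using m b by (simp add: field_simps abs_mult abs_divide abs_minus_commute)
  also have "\<dots> \<le> \<bar>x * (b - m)\<bar> / (m * (m / z))"
    using b_lower m z b by (intro divide_left_mono mult_left_mono mult_pos_pos) auto
  finally show ?thesis
    using m z by (simp add: power2_eq_square field_simps)
qed

lemma compact_box_functions:
  "compact {v :: 'a \<Rightarrow> real. \<forall>x. v x \<in> (if x \<in> S then {- b x .. b x} else {0})}"
proof -
  have "{v :: 'a \<Rightarrow> real. \<forall>x. v x \<in> (if x \<in> S then {- b x .. b x} else {0})}
      = PiE UNIV (\<lambda>x. if x \<in> S then {- b x .. b x} else {0})"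
    by (auto simp: PiE_def extensional_def Pi_def)
  moreover have "compactin (product_topology (\<lambda>_. euclidean) UNIV)
      (PiE UNIV (\<lambda>x. if x \<in> S then {- b x .. b x} else {0 :: real}))"
    by (subst compactin_PiE) auto
  ultimately show ?thesis by (simp add: euclidean_product_topology)
qed

lemma tendsto_of_abs_diff_le_inverse_sqrt:
  fixes a :: "nat \<Rightarrow> real"
  assumes "\<And>n. 1 \<le> n \<Longrightarrow> \<bar>a n - L\<bar> \<le> C / sqrt n"
  shows "a \<longlonglongrightarrow> L"
proof -
  have "(\<lambda>n. C * inverse (sqrt (real n))) \<longlonglongrightarrow> 0"
    using tendsto_mult_right_zero[OF tendsto_inverse_0_at_top[OF
          filterlim_compose[OF sqrt_at_top filterlim_real_sequentially]]] .
  moreover have "\<forall>\<^sub>F n in sequentially. norm (a n - L) \<le> C * inverse (sqrt (real n))"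
    using eventually_ge_at_top[of 1] by eventually_elim (use assms in \<open>simp add: field_simps\<close>)
  ultimately have "(\<lambda>n. a n - L) \<longlonglongrightarrow> 0" by (rule Lim_null_comparison[rotated])
  thus ?thesis by (simp add: LIM_zero_iff)
qed

lemma finite_states: "finite (states p)"
proof -
  have "states p = {xs. set xs \<subseteq> UNIV \<and> length xs = p}" by (auto simp: states_def)
  thus ?thesis using finite_lists_length_eq[of "UNIV :: bool set" p] by simp
qed

lemma states_length: "x \<in> states p \<Longrightarrow> length x = p"
  by (simp add: states_def)

lemma flip_in_states: "x \<in> states p \<Longrightarrow> flip x i \<in> states p"
  by (simp add: states_def flip_def)

lemma flip_flip: "i < length x \<Longrightarrow> flip (flip x i) i = x"
  by (simp add: flip_def)

lemma flip_neq: "i < length x \<Longrightarrow> flip x i \<noteq> x"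
  unfolding flip_def by (metis nth_list_update_eq)

lemma sum_states_flip: "i < p \<Longrightarrow> (\<Sum>x\<in>states p. F (flip x i)) = (\<Sum>x\<in>states p. F x)"
  by (rule sum.reindex_bij_witness[where i="\<lambda>x. flip x i" and j="\<lambda>x. flip x i"])
     (auto simp: flip_in_states flip_flip states_length)

lemma flip_invariant_imp_eq:
  assumes inv: "\<And>x i. x \<in> states p \<Longrightarrow> i < p \<Longrightarrow> v (flip x i) = v x"
    and "x \<in> states p" "y \<in> states p"
  shows "v x = v y"
  using assms(2)
proof (induction "card {i. i < p \<and> x ! i \<noteq> y ! i}" arbitrary: x rule: less_induct)
  case less
  show ?case
  proof (cases "\<exists>i<p. x ! i \<noteq> y ! i")
    case False
    hence "x = y" using less.prems \<open>y \<in> states p\<close> by (intro nth_equalityI) (auto simp: states_def)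
    thus ?thesis by simp
  next
    case True
    then obtain i where i: "i < p" "x ! i \<noteq> y ! i" by blast
    have "{j. j < p \<and> flip x i ! j \<noteq> y ! j} = {j. j < p \<and> x ! j \<noteq> y ! j} - {i}"
      using i less.prems by (auto simp: flip_def nth_list_update states_def)
    moreover have "card ({j. j < p \<and> x ! j \<noteq> y ! j} - {i}) < card {j. j < p \<and> x ! j \<noteq> y ! j}"
      using i by (intro card_Diff1_less) auto
    ultimately have "card {j. j < p \<and> flip x i ! j \<noteq> y ! j} < card {j. j < p \<and> x ! j \<noteq> y ! j}"
      by simp
    hence "v (flip x i) = v y" using less.prems by (intro less.hyps) (auto intro: flip_in_states)
    thus ?thesis using inv[OF less.prems i(1)] by simp
  qed
qed

lemma path_expect_add: "path_expect p f n (\<lambda>ps. F ps + G ps) = path_expect p f n F + path_expect p f n G"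
  by (simp add: path_expect_def sum.distrib algebra_simps)

lemma path_expect_diff: "path_expect p f n (\<lambda>ps. F ps - G ps) = path_expect p f n F - path_expect p f n G"
  by (simp add: path_expect_def sum_subtractf algebra_simps)

lemma path_expect_scaled: "path_expect p f n (\<lambda>ps. c * F ps) = c * path_expect p f n F"
  by (simp add: path_expect_def sum_distrib_left algebra_simps)

lemma path_expect_divide: "path_expect p f n (\<lambda>ps. F ps / c) = path_expect p f n F / c"
  by (simp add: path_expect_def sum_divide_distrib)

lemma path_expect_cong:
  "(\<And>ps. ps \<in> paths p n \<Longrightarrow> F ps = G ps) \<Longrightarrow> path_expect p f n F = path_expect p f n G"
  by (simp add: path_expect_def)

lemma paths_Suc: "paths p (Suc n) = (\<lambda>(ps, x). ps @ [x]) ` (paths p n \<times> states p)"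
proof (rule Set.set_eqI)
  fix qs
  show "qs \<in> paths p (Suc n) \<longleftrightarrow> qs \<in> (\<lambda>(ps, x). ps @ [x]) ` (paths p n \<times> states p)"
  proof
    assume qs: "qs \<in> paths p (Suc n)"
    then obtain ps x where "qs = ps @ [x]" by (cases qs rule: rev_cases) (auto simp: paths_def)
    thus "qs \<in> (\<lambda>(ps, x). ps @ [x]) ` (paths p n \<times> states p)" using qs
      by (auto simp: paths_def image_iff)
  qed (auto simp: paths_def)
qed

lemma path_prob_snoc:
  assumes "ps \<noteq> []"
  shows "path_prob p f (ps @ [x]) = path_prob p f ps * tgs_P p f (last ps) x"
proof -
  obtain m where m: "length ps = Suc m" using assms by (cases ps) auto
  have "(\<Prod>t<Suc m. tgs_P p f ((ps @ [x]) ! t) ((ps @ [x]) ! Suc t))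
      = (\<Prod>t<m. tgs_P p f ((ps @ [x]) ! t) ((ps @ [x]) ! Suc t)) * tgs_P p f ((ps @ [x]) ! m) x"
    using m by (simp add: nth_append)
  also have "(\<Prod>t<m. tgs_P p f ((ps @ [x]) ! t) ((ps @ [x]) ! Suc t)) = (\<Prod>t<m. tgs_P p f (ps ! t) (ps ! Suc t))"
    using m by (intro prod.cong refl) (simp add: nth_append)
  also have "(ps @ [x]) ! m = last ps" using m assms by (simp add: nth_append last_conv_nth)
  finally show ?thesis using m assms by (simp add: path_prob_def nth_append)
qed

section \<open>The TGS kernel and its Dirichlet form\<close>

locale tgs =
  fixes p :: nat and f :: "bool list \<Rightarrow> real"
  assumes p_pos: "1 \<le> p" and f_pos: "\<And>x. x \<in> states p \<Longrightarrow> 0 < f x"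
    and sum_f: "(\<Sum>x\<in>states p. f x) = 1"
begin

abbreviation \<X> where "\<X> \<equiv> states p"

(* The flux f x * p_i(x) through the edge between x and flip x i; its symmetry in the two
   endpoints is the detailed balance of Q_TGS with respect to f. *)
definition edge_weight :: "nat \<Rightarrow> bool list \<Rightarrow> real" where
  "edge_weight i x = (f x + f (flip x i)) / 2"

lemma edge_weight_pos: "x \<in> \<X> \<Longrightarrow> 0 < edge_weight i x"
  using f_pos[of x] f_pos[OF flip_in_states[of x p i]] by (simp add: edge_weight_def)

lemma edge_weight_flip: "x \<in> \<X> \<Longrightarrow> i < p \<Longrightarrow> edge_weight i (flip x i) = edge_weight i x"
  by (simp add: edge_weight_def flip_flip states_length)

lemma sum_edge_weight_mult_flip:
  assumes "i < p"
  shows "(\<Sum>x\<in>\<X>. edge_weight i x * F (flip x i)) = (\<Sum>x\<in>\<X>. edge_weight i x * F x)"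
proof -
  have "(\<Sum>x\<in>\<X>. edge_weight i x * F (flip x i)) = (\<Sum>x\<in>\<X>. edge_weight i (flip x i) * F (flip x i))"
    using assms by (intro sum.cong refl) (simp add: edge_weight_flip)
  also have "\<dots> = (\<Sum>x\<in>\<X>. edge_weight i x * F x)"
    using sum_states_flip[OF assms, of "\<lambda>y. edge_weight i y * F y"] .
  finally show ?thesis .
qed

lemma f_mult_tgs_pi: "x \<in> \<X> \<Longrightarrow> f x * tgs_pi f x i = edge_weight i x"
  using f_pos[of x] f_pos[OF flip_in_states[of x p i]]
  by (simp add: tgs_pi_def cond_prob_def edge_weight_def field_simps)

lemma tgs_pi_ge_half: "x \<in> \<X> \<Longrightarrow> 1 / 2 \<le> tgs_pi f x i"
  using f_pos[of x] f_pos[OF flip_in_states[of x p i]]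
  by (simp add: tgs_pi_def cond_prob_def field_simps)

lemma tgs_pi_pos: "x \<in> \<X> \<Longrightarrow> 0 < tgs_pi f x i"
  using tgs_pi_ge_half[of x i] by linarith

lemma sum_tgs_pi_pos: "x \<in> \<X> \<Longrightarrow> 0 < (\<Sum>i<p. tgs_pi f x i)"
  using p_pos by (intro sum_pos) (auto intro: tgs_pi_pos simp: lessThan_empty_iff)

lemma tgs_Z_eq: "tgs_Z p f x = (\<Sum>i<p. tgs_pi f x i) / p"
  by (simp add: tgs_Z_def)

lemma tgs_Z_ge_half: "x \<in> \<X> \<Longrightarrow> 1 / 2 \<le> tgs_Z p f x"
proof -
  assume x: "x \<in> \<X>"
  have "(\<Sum>i<p. 1 / 2) \<le> (\<Sum>i<p. tgs_pi f x i)"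
    using tgs_pi_ge_half[OF x] by (intro sum_mono)
  thus ?thesis using p_pos by (simp add: tgs_Z_eq field_simps)
qed

lemma tgs_Z_pos: "x \<in> \<X> \<Longrightarrow> 0 < tgs_Z p f x"
  using tgs_Z_ge_half[of x] by linarith

lemma tgs_P_nonneg: "x \<in> \<X> \<Longrightarrow> 0 \<le> tgs_P p f x y"
  using sum_tgs_pi_pos[of x] tgs_pi_pos[of x]
  unfolding tgs_P_def by (intro sum_nonneg divide_nonneg_pos) (auto intro: less_imp_le)

lemma tgs_P_diag: "x \<in> \<X> \<Longrightarrow> tgs_P p f x x = 0"
proof -
  assume "x \<in> \<X>"
  hence "{i. i < p \<and> flip x i = x} = {}" using flip_neq[of _ x] by (auto simp: states_length)
  thus ?thesis unfolding tgs_P_def by (simp only: sum.empty)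
qed

definition P_apply :: "(bool list \<Rightarrow> real) \<Rightarrow> bool list \<Rightarrow> real" where
  "P_apply v x = (\<Sum>y\<in>\<X>. tgs_P p f x y * v y)"

lemma P_apply_eq:
  assumes "x \<in> \<X>"
  shows "P_apply v x = (\<Sum>i<p. tgs_pi f x i * v (flip x i)) / (\<Sum>i<p. tgs_pi f x i)"
proof -
  have "P_apply v x
      = (\<Sum>y\<in>\<X>. \<Sum>i\<in>{i. i \<in> {..<p} \<and> flip x i = y}. tgs_pi f x i * v y) / (\<Sum>i<p. tgs_pi f x i)"
    by (simp add: P_apply_def tgs_P_def sum_divide_distrib sum_distrib_right)
  also have "(\<Sum>y\<in>\<X>. \<Sum>i\<in>{i. i \<in> {..<p} \<and> flip x i = y}. tgs_pi f x i * v y)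
      = (\<Sum>i<p. \<Sum>y\<in>{y. y \<in> \<X> \<and> flip x i = y}. tgs_pi f x i * v y)"
    by (rule sum.swap_restrict[symmetric]) (simp_all add: finite_states)
  also have "\<dots> = (\<Sum>i<p. tgs_pi f x i * v (flip x i))"
  proof (intro sum.cong refl)
    fix i
    have "{y. y \<in> \<X> \<and> flip x i = y} = {flip x i}" using flip_in_states[OF assms] by auto
    thus "(\<Sum>y\<in>{y. y \<in> \<X> \<and> flip x i = y}. tgs_pi f x i * v y) = tgs_pi f x i * v (flip x i)"
      by simp
  qed
  finally show ?thesis .
qed

lemma P_apply_const: "x \<in> \<X> \<Longrightarrow> P_apply (\<lambda>_. c) x = c"
  using sum_tgs_pi_pos[of x] by (simp add: P_apply_eq sum_distrib_right[symmetric])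

lemma sum_tgs_P: "x \<in> \<X> \<Longrightarrow> (\<Sum>y\<in>\<X>. tgs_P p f x y) = 1"
  using P_apply_const[of x 1] by (simp add: P_apply_def)

lemma f_mult_tgs_Z: "x \<in> \<X> \<Longrightarrow> f x * tgs_Z p f x = (\<Sum>i<p. edge_weight i x) / p"
proof -
  assume x: "x \<in> \<X>"
  have "f x * tgs_Z p f x = (\<Sum>i<p. f x * tgs_pi f x i) / p"
    by (simp add: tgs_Z_eq sum_distrib_left)
  thus ?thesis by (simp add: f_mult_tgs_pi[OF x])
qed

lemma f_mult_tgs_Z_mult_P_apply:
  "x \<in> \<X> \<Longrightarrow> f x * tgs_Z p f x * P_apply v x = (\<Sum>i<p. edge_weight i x * v (flip x i)) / p"
proof -
  assume x: "x \<in> \<X>"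
  have "f x * tgs_Z p f x * P_apply v x = f x * (\<Sum>i<p. tgs_pi f x i * v (flip x i)) / p"
    using sum_tgs_pi_pos[OF x] by (simp add: tgs_Z_eq P_apply_eq[OF x])
  also have "\<dots> = (\<Sum>i<p. f x * tgs_pi f x i * v (flip x i)) / p"
    by (simp add: sum_distrib_left mult.assoc)
  finally show ?thesis by (simp add: f_mult_tgs_pi[OF x])
qed

lemma sum_f_mult_tgs_Z: "(\<Sum>x\<in>\<X>. f x * tgs_Z p f x) = 1"
proof -
  have "(\<Sum>x\<in>\<X>. f x * tgs_Z p f x) = (\<Sum>x\<in>\<X>. \<Sum>i<p. edge_weight i x) / p"
    by (simp add: f_mult_tgs_Z sum_divide_distrib)
  also have "\<dots> = (\<Sum>i<p. \<Sum>x\<in>\<X>. edge_weight i x) / p"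
    by (subst sum.swap) (rule refl)
  also have "\<dots> = (\<Sum>i<p. 1) / p"
    by (intro arg_cong[where f="\<lambda>s. s / _"] sum.cong refl)
       (simp add: edge_weight_def sum.distrib sum_states_flip sum_f flip: sum_divide_distrib)
  finally show ?thesis using p_pos by simp
qed

lemma tgs_stat_eq: "tgs_stat p f x = f x * tgs_Z p f x"
  by (simp add: tgs_stat_def sum_f_mult_tgs_Z)

lemma tgs_stat_nonneg: "x \<in> \<X> \<Longrightarrow> 0 \<le> tgs_stat p f x"
  using f_pos[of x] tgs_Z_pos[of x] by (simp add: tgs_stat_eq)

lemma sum_tgs_stat: "(\<Sum>x\<in>\<X>. tgs_stat p f x) = 1"
  by (simp add: tgs_stat_eq sum_f_mult_tgs_Z)

lemma P_apply_stationary: "(\<Sum>x\<in>\<X>. tgs_stat p f x * P_apply v x) = (\<Sum>x\<in>\<X>. tgs_stat p f x * v x)"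
proof -
  have "(\<Sum>x\<in>\<X>. tgs_stat p f x * P_apply v x) = (\<Sum>x\<in>\<X>. \<Sum>i<p. edge_weight i x * v (flip x i)) / p"
    by (simp add: tgs_stat_eq f_mult_tgs_Z_mult_P_apply sum_divide_distrib)
  also have "\<dots> = (\<Sum>i<p. \<Sum>x\<in>\<X>. edge_weight i x * v (flip x i)) / p"
    by (subst sum.swap) (rule refl)
  also have "\<dots> = (\<Sum>i<p. \<Sum>x\<in>\<X>. edge_weight i x * v x) / p"
    by (simp add: sum_edge_weight_mult_flip)
  also have "\<dots> = (\<Sum>x\<in>\<X>. \<Sum>i<p. edge_weight i x * v x) / p"
    by (subst sum.swap) (rule refl)
  also have "\<dots> = (\<Sum>x\<in>\<X>. tgs_stat p f x * v x)"
    by (simp add: tgs_stat_eq f_mult_tgs_Z sum_divide_distrib sum_distrib_right)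
  finally show ?thesis .
qed

definition generator :: "(bool list \<Rightarrow> real) \<Rightarrow> bool list \<Rightarrow> real" where
  "generator v x = tgs_Z p f x * (v x - P_apply v x)"

lemma minus_tgs_Q_apply:
  assumes x: "x \<in> \<X>"
  shows "- (\<Sum>y\<in>\<X>. tgs_Q p f x y * v y) = generator v x"
proof -
  have off_diag: "(\<Sum>y\<in>\<X> - {x}. tgs_P p f x y * w y) = P_apply w x" for w
    using sum.remove[OF finite_states x, of "\<lambda>y. tgs_P p f x y * w y"] tgs_P_diag[OF x]
    by (simp add: P_apply_def)
  have diag: "tgs_Q p f x x = - tgs_Z p f x"
    using off_diag[of "\<lambda>_. 1"] P_apply_const[OF x, of 1]
    by (simp add: tgs_Q_def sum_distrib_left[symmetric])
  have "(\<Sum>y\<in>\<X> - {x}. tgs_Q p f x y * v y) = tgs_Z p f x * (\<Sum>y\<in>\<X> - {x}. tgs_P p f x y * v y)"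
    by (auto simp: tgs_Q_def sum_distrib_left mult.assoc intro!: sum.cong)
  hence "(\<Sum>y\<in>\<X> - {x}. tgs_Q p f x y * v y) = tgs_Z p f x * P_apply v x"
    by (simp add: off_diag)
  thus ?thesis
    using sum.remove[OF finite_states x, of "\<lambda>y. tgs_Q p f x y * v y"] diag
    by (simp add: generator_def algebra_simps)
qed

lemma f_mult_generator:
  assumes x: "x \<in> \<X>"
  shows "f x * generator v x = (\<Sum>i<p. edge_weight i x * (v x - v (flip x i))) / p"
proof -
  have "f x * generator v x = f x * tgs_Z p f x * v x - f x * tgs_Z p f x * P_apply v x"
    by (simp add: generator_def algebra_simps)
  also have "\<dots> = (\<Sum>i<p. edge_weight i x * v x) / p - (\<Sum>i<p. edge_weight i x * v (flip x i)) / p"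
    by (simp only: f_mult_tgs_Z_mult_P_apply[OF x]) (simp add: f_mult_tgs_Z[OF x] sum_distrib_right)
  finally show ?thesis
    by (simp add: diff_divide_distrib sum_subtractf right_diff_distrib)
qed

definition f_mean :: "(bool list \<Rightarrow> real) \<Rightarrow> real" where
  "f_mean v = (\<Sum>x\<in>\<X>. f x * v x)"

definition f_inner :: "(bool list \<Rightarrow> real) \<Rightarrow> (bool list \<Rightarrow> real) \<Rightarrow> real" where
  "f_inner v w = (\<Sum>x\<in>\<X>. f x * v x * w x)"

definition f_norm2 :: "(bool list \<Rightarrow> real) \<Rightarrow> real" where
  "f_norm2 v = (\<Sum>x\<in>\<X>. f x * (v x)^2)"

definition dirichlet :: "(bool list \<Rightarrow> real) \<Rightarrow> (bool list \<Rightarrow> real) \<Rightarrow> real" where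
  "dirichlet v w = f_inner (generator v) w"

lemma dirichlet_edge_sum:
  "dirichlet v w
   = (\<Sum>i<p. \<Sum>x\<in>\<X>. edge_weight i x * (v x - v (flip x i)) * (w x - w (flip x i))) / (2 * p)"
proof -
  have symmetrize: "2 * (\<Sum>x\<in>\<X>. edge_weight i x * (v x - v (flip x i)) * w x)
      = (\<Sum>x\<in>\<X>. edge_weight i x * (v x - v (flip x i)) * (w x - w (flip x i)))" if i: "i < p" for i
  proof -
    have "(\<Sum>x\<in>\<X>. edge_weight i x * (v x - v (flip x i)) * w x)
        = (\<Sum>x\<in>\<X>. edge_weight i x * ((v (flip x i) - v (flip (flip x i) i)) * w (flip x i)))"
      using sum_edge_weight_mult_flip[OF i, of "\<lambda>y. (v y - v (flip y i)) * w y"] by (simp add: mult.assoc)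
    also have "\<dots> = (\<Sum>x\<in>\<X>. edge_weight i x * (v (flip x i) - v x) * w (flip x i))"
      using i by (intro sum.cong refl) (simp add: flip_flip states_length)
    finally have "(\<Sum>x\<in>\<X>. edge_weight i x * (v x - v (flip x i)) * w x)
        = (\<Sum>x\<in>\<X>. edge_weight i x * (v (flip x i) - v x) * w (flip x i))" .
    hence "2 * (\<Sum>x\<in>\<X>. edge_weight i x * (v x - v (flip x i)) * w x)
        = (\<Sum>x\<in>\<X>. edge_weight i x * (v x - v (flip x i)) * w x)
          + (\<Sum>x\<in>\<X>. edge_weight i x * (v (flip x i) - v x) * w (flip x i))"
      by simp
    thus ?thesis
      unfolding sum.distrib[symmetric] by (simp add: algebra_simps)
  qed
  have "dirichlet v w = (\<Sum>x\<in>\<X>. \<Sum>i<p. edge_weight i x * (v x - v (flip x i)) * w x) / p"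
    by (simp add: dirichlet_def f_inner_def f_mult_generator sum_divide_distrib sum_distrib_right)
  also have "\<dots> = (\<Sum>i<p. 2 * (\<Sum>x\<in>\<X>. edge_weight i x * (v x - v (flip x i)) * w x)) / (2 * p)"
    by (subst sum.swap) (simp add: sum_distrib_left[symmetric])
  finally show ?thesis by (simp add: symmetrize)
qed

lemma dirichlet_nonneg: "0 \<le> dirichlet v v"
proof -
  have "0 \<le> edge_weight i x * ((v x - v (flip x i)) * (v x - v (flip x i)))" if "x \<in> \<X>" for i x
    using edge_weight_pos[OF that, of i] by (intro mult_nonneg_nonneg zero_le_square) simp
  thus ?thesis
    unfolding dirichlet_edge_sum mult.assoc by (intro divide_nonneg_nonneg sum_nonneg) auto
qed

lemma f_mean_generator: "f_mean (generator v) = 0"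
  using dirichlet_edge_sum[of v "\<lambda>_. 1"] by (simp add: dirichlet_def f_inner_def f_mean_def)

lemma dirichlet_add_const: "dirichlet (\<lambda>x. v x + c) (\<lambda>x. v x + c) = dirichlet v v"
  by (simp add: dirichlet_edge_sum)

lemma dirichlet_add_scaled:
  "dirichlet (\<lambda>x. v x + t * w x) (\<lambda>x. v x + t * w x)
   = dirichlet v v + 2 * t * dirichlet v w + t^2 * dirichlet w w"
proof -
  define d where "d u i x = u x - u (flip x i)" for u :: "bool list \<Rightarrow> real" and i x
  have D: "dirichlet u u' = (\<Sum>i<p. \<Sum>x\<in>\<X>. edge_weight i x * d u i x * d u' i x) / (2 * p)" for u u'
    by (simp add: dirichlet_edge_sum d_def)
  have "d (\<lambda>x. v x + t * w x) i x = d v i x + t * d w i x" for i x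
    by (simp add: d_def algebra_simps)
  hence "dirichlet (\<lambda>x. v x + t * w x) (\<lambda>x. v x + t * w x)
      = (\<Sum>i<p. \<Sum>x\<in>\<X>. edge_weight i x * d v i x * d v i x
          + 2 * t * (edge_weight i x * d v i x * d w i x) + t^2 * (edge_weight i x * d w i x * d w i x)) / (2 * p)"
    by (simp add: D power2_eq_square algebra_simps)
  also have "\<dots> = dirichlet v v + 2 * t * dirichlet v w + t^2 * dirichlet w w"
    by (simp add: D sum.distrib sum_distrib_left add_divide_distrib)
  finally show ?thesis .
qed

lemma dirichlet_scaled: "dirichlet (\<lambda>x. c * v x) (\<lambda>x. c * v x) = c^2 * dirichlet v v"
  using dirichlet_add_scaled[of "\<lambda>_. 0" c v] by (simp add: dirichlet_edge_sum)

lemma dirichlet_cong: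
  "(\<And>x. x \<in> \<X> \<Longrightarrow> v x = w x) \<Longrightarrow> dirichlet v v = dirichlet w w"
  by (simp add: dirichlet_edge_sum flip_in_states)

lemma dirichlet_eq_0_imp_eq:
  assumes "dirichlet v v = 0" "x \<in> \<X>" "y \<in> \<X>"
  shows "v x = v y"
proof (rule flip_invariant_imp_eq[OF _ assms(2,3)])
  fix x i assume x: "x \<in> \<X>" and i: "i < p"
  define T where "T j z = edge_weight j z * (v z - v (flip z j))^2" for j z
  have T_nonneg: "0 \<le> T j z" if "z \<in> \<X>" for j z
    using edge_weight_pos[OF that, of j] by (simp add: T_def)
  have "(\<Sum>j<p. \<Sum>z\<in>\<X>. T j z) = 0"
    using assms(1) p_pos by (simp add: dirichlet_edge_sum T_def power2_eq_square mult.assoc)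
  hence "(\<Sum>z\<in>\<X>. T i z) = 0"
    using sum_nonneg_eq_0_iff[of "{..<p}" "\<lambda>j. \<Sum>z\<in>\<X>. T j z"] i T_nonneg
    by (simp add: sum_nonneg)
  hence "T i x = 0"
    using sum_nonneg_eq_0_iff[of \<X> "T i"] x T_nonneg finite_states by simp
  thus "v (flip x i) = v x" using edge_weight_pos[OF x, of i] by (simp add: T_def)
qed

lemma f_norm2_nonneg: "0 \<le> f_norm2 v"
  unfolding f_norm2_def by (intro sum_nonneg) (simp add: less_imp_le[OF f_pos])

lemma f_norm2_eq_0_imp:
  assumes "f_norm2 v = 0" and x: "x \<in> \<X>"
  shows "v x = 0"
proof -
  have "f x * (v x)^2 = 0"
    using assms(1) sum_nonneg_eq_0_iff[of \<X> "\<lambda>x. f x * (v x)^2"] x f_pos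
    by (simp add: f_norm2_def finite_states less_imp_le)
  thus ?thesis using f_pos[OF x] by simp
qed

lemma f_norm2_pos: "x \<in> \<X> \<Longrightarrow> v x \<noteq> 0 \<Longrightarrow> 0 < f_norm2 v"
  using f_norm2_nonneg[of v] f_norm2_eq_0_imp[of v x] by linarith

lemma f_norm2_add_scaled:
  "f_norm2 (\<lambda>x. v x + t * w x) = f_norm2 v + 2 * t * f_inner v w + t^2 * f_norm2 w"
  by (simp add: f_norm2_def f_inner_def power2_eq_square sum.distrib sum_distrib_left algebra_simps)

lemma f_inner_add_scaled: "f_inner k (\<lambda>x. v x + t * w x) = f_inner k v + t * f_inner k w"
  by (simp add: f_inner_def sum.distrib sum_distrib_left algebra_simps)

lemma f_mean_add_scaled: "f_mean (\<lambda>x. v x + t * w x) = f_mean v + t * f_mean w"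
  by (simp add: f_mean_def sum.distrib sum_distrib_left algebra_simps)

lemma two_f_inner_le:
  assumes "0 < e"
  shows "2 * f_inner k v \<le> e * f_norm2 v + f_norm2 k / e"
proof -
  have "0 \<le> f_norm2 (\<lambda>x. k x + (- e) * v x)" by (rule f_norm2_nonneg)
  hence "2 * e * f_inner k v \<le> f_norm2 k + e^2 * f_norm2 v"
    unfolding f_norm2_add_scaled by simp
  thus ?thesis using assms by (simp add: power2_eq_square field_simps)
qed

lemma continuous_on_dirichlet: "continuous_on UNIV (\<lambda>v. dirichlet v v)"
  unfolding dirichlet_def f_inner_def generator_def P_apply_def
  by (intro continuous_intros continuous_on_product_coordinates)

lemma continuous_on_f_mean: "continuous_on UNIV f_mean"
  unfolding f_mean_def by (intro continuous_intros continuous_on_product_coordinates)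

lemma continuous_on_f_inner: "continuous_on UNIV (f_inner k)"
  unfolding f_inner_def by (intro continuous_intros continuous_on_product_coordinates)

lemma continuous_on_f_norm2: "continuous_on UNIV f_norm2"
  unfolding f_norm2_def by (intro continuous_intros continuous_on_product_coordinates)


section \<open>Spectral gap and the Poisson equation\<close>

lemma f_mult_square_le_f_norm2: "x \<in> \<X> \<Longrightarrow> f x * (v x)^2 \<le> f_norm2 v"
  unfolding f_norm2_def
  by (rule member_le_sum[where f="\<lambda>x. f x * (v x)^2"]) (auto simp: finite_states less_imp_le[OF f_pos])

lemma f_mean_scaled: "f_mean (\<lambda>x. c * v x) = c * f_mean v"
  by (simp add: f_mean_def sum_distrib_left algebra_simps)

lemma f_norm2_scaled: "f_norm2 (\<lambda>x. c * v x) = c^2 * f_norm2 v"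
  by (simp add: f_norm2_def power_mult_distrib sum_distrib_left algebra_simps)

lemma exists_minimiser:
  fixes F :: "(bool list \<Rightarrow> real) \<Rightarrow> real" and \<Phi> :: "(bool list \<Rightarrow> real) \<Rightarrow> bool"
  assumes cont: "continuous_on UNIV F" and closed: "closed {v. \<Phi> v}"
    and local_F: "\<And>v w. (\<And>x. x \<in> \<X> \<Longrightarrow> v x = w x) \<Longrightarrow> F v = F w"
    and local_\<Phi>: "\<And>v w. (\<And>x. x \<in> \<X> \<Longrightarrow> v x = w x) \<Longrightarrow> \<Phi> v \<Longrightarrow> \<Phi> w"
    and bounded: "\<And>v. \<Phi> v \<Longrightarrow> f_norm2 v \<le> R"
    and "\<Phi> v_init"
  obtains v0 where "\<Phi> v0" "\<And>v. \<Phi> v \<Longrightarrow> F v0 \<le> F v"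
proof -
  (* F and \<Phi> only see values on the state space, so it suffices to minimise over functions
     vanishing outside it; by the norm bound these lie in a compact box. *)
  define restrict where "restrict v x = (if x \<in> \<X> then v x else 0)" for v :: "bool list \<Rightarrow> real" and x
  define C where "C = {v. \<forall>x. v x \<in> (if x \<in> \<X> then {- sqrt (R / f x) .. sqrt (R / f x)} else {0})}
    \<inter> {v. \<Phi> v}"
  have "compact C" unfolding C_def by (intro compact_Int_closed compact_box_functions closed)
  have restrict_in_C: "restrict v \<in> C" if "\<Phi> v" for v
  proof -
    have "v x \<in> {- sqrt (R / f x) .. sqrt (R / f x)}" if "x \<in> \<X>" for x
    proof -
      have "f x * (v x)^2 \<le> R"
        using order_trans[OF f_mult_square_le_f_norm2[OF that] bounded[OF \<open>\<Phi> v\<close>]] .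
      hence "(v x)^2 \<le> R / f x" using f_pos[OF that] by (simp add: field_simps)
      hence "\<bar>v x\<bar> \<le> sqrt (R / f x)" using real_sqrt_le_mono by fastforce
      thus ?thesis using abs_le_iff[of "v x"] by simp
    qed
    moreover have "\<Phi> (restrict v)" by (rule local_\<Phi>[OF _ \<open>\<Phi> v\<close>]) (simp add: restrict_def)
    ultimately show ?thesis by (auto simp: C_def restrict_def simp del: atLeastAtMost_iff)
  qed
  hence "C \<noteq> {}" using \<open>\<Phi> v_init\<close> by blast
  then obtain v0 where "v0 \<in> C" and min: "\<And>v. v \<in> C \<Longrightarrow> F v0 \<le> F v"
    using continuous_attains_inf[OF \<open>compact C\<close> _ continuous_on_subset[OF cont]] by blast
  show ?thesis
  proof
    show "\<Phi> v0" using \<open>v0 \<in> C\<close> by (simp add: C_def)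
    fix v assume "\<Phi> v"
    have "F v0 \<le> F (restrict v)" by (rule min[OF restrict_in_C[OF \<open>\<Phi> v\<close>]])
    also have "\<dots> = F v" by (rule local_F) (simp add: restrict_def)
    finally show "F v0 \<le> F v" .
  qed
qed

lemma exists_f_mean_0_nonzero: "\<exists>w. f_mean w = 0 \<and> 0 < f_norm2 w"
proof -
  define x0 where "x0 = replicate p False"
  define x1 where "x1 = flip x0 0"
  have x0: "x0 \<in> \<X>" by (simp add: x0_def states_def)
  have x1: "x1 \<in> \<X>" by (simp add: x1_def flip_in_states x0)
  have "x1 \<noteq> x0" unfolding x1_def using flip_neq[of 0 x0] p_pos by (simp add: x0_def)
  define w where "w x = (if x = x0 then 1 / f x0 else 0) - (if x = x1 then 1 / f x1 else 0)" for x
  have "f_mean w = (\<Sum>x\<in>\<X>. (if x = x0 then 1 else 0) - (if x = x1 then 1 else 0))"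
    unfolding f_mean_def using \<open>x1 \<noteq> x0\<close> f_pos[OF x0] f_pos[OF x1]
    by (intro sum.cong) (auto simp: w_def right_diff_distrib)
  also have "\<dots> = 0" using x0 x1 by (simp add: sum_subtractf finite_states)
  finally show ?thesis
    using f_norm2_pos[OF x0, of w] \<open>x1 \<noteq> x0\<close> f_pos[OF x0] by (auto simp: w_def)
qed

lemma rayleigh_minimiser:
  obtains v0 where "f_mean v0 = 0" "f_norm2 v0 = 1"
    "\<And>w. f_mean w = 0 \<Longrightarrow> dirichlet v0 v0 * f_norm2 w \<le> dirichlet w w"
proof -
  define normalise where "normalise w = (\<lambda>x. (1 / sqrt (f_norm2 w)) * w x)" for w
  have normalise: "f_mean (normalise w) = 0" "f_norm2 (normalise w) = 1"
    "dirichlet (normalise w) (normalise w) = dirichlet w w / f_norm2 w"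
    if "f_mean w = 0" "0 < f_norm2 w" for w
    using that unfolding normalise_def f_mean_scaled f_norm2_scaled dirichlet_scaled
    by (simp_all add: power_divide)
  obtain w1 where "f_mean w1 = 0" "0 < f_norm2 w1" using exists_f_mean_0_nonzero by blast
  obtain v0 where v0: "f_mean v0 = 0 \<and> f_norm2 v0 = 1"
    and min: "\<And>v. f_mean v = 0 \<and> f_norm2 v = 1 \<Longrightarrow> dirichlet v0 v0 \<le> dirichlet v v"
  proof (rule exists_minimiser[where \<Phi>="\<lambda>v. f_mean v = 0 \<and> f_norm2 v = 1" and R=1])
    show "closed {v. f_mean v = 0 \<and> f_norm2 v = 1}"
      by (intro closed_Collect_conj closed_Collect_eq continuous_on_f_mean continuous_on_f_norm2
          continuous_on_const)
    show "f_mean v = 0 \<and> f_norm2 v = 1 \<Longrightarrow> f_mean w = 0 \<and> f_norm2 w = 1"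
      if "\<And>x. x \<in> \<X> \<Longrightarrow> v x = w x" for v w
      using that by (simp add: f_mean_def f_norm2_def)
    show "f_mean (normalise w1) = 0 \<and> f_norm2 (normalise w1) = 1"
      using normalise \<open>f_mean w1 = 0\<close> \<open>0 < f_norm2 w1\<close> by simp
    show "continuous_on UNIV (\<lambda>v. dirichlet v v)" by (rule continuous_on_dirichlet)
    show "dirichlet v v = dirichlet w w" if "\<And>x. x \<in> \<X> \<Longrightarrow> v x = w x" for v w
      using that by (rule dirichlet_cong)
  qed auto
  show ?thesis
  proof
    show "f_mean v0 = 0" "f_norm2 v0 = 1" using v0 by auto
    fix w assume "f_mean w = 0"
    show "dirichlet v0 v0 * f_norm2 w \<le> dirichlet w w"
    proof (cases "f_norm2 w = 0")
      case True thus ?thesis using dirichlet_nonneg[of w] by simp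
    next
      case False
      hence "0 < f_norm2 w" using f_norm2_nonneg[of w] by simp
      thus ?thesis
        using min[of "normalise w"] normalise[OF \<open>f_mean w = 0\<close>] by (simp add: field_simps)
    qed
  qed
qed

lemma generator_eq_if_weak_solution:
  assumes "f_mean k = 0" and weak: "\<And>w. f_mean w = 0 \<Longrightarrow> dirichlet u w = f_inner k w"
    and x: "x \<in> \<X>"
  shows "generator u x = k x"
proof -
  define r where "r y = generator u y - k y" for y
  have "f_mean r = 0"
    using f_mean_generator[of u] assms(1) by (simp add: r_def f_mean_def right_diff_distrib sum_subtractf)
  hence "f_inner (generator u) r = f_inner k r" using weak by (simp add: dirichlet_def)
  moreover have "f_norm2 r = f_inner (generator u) r - f_inner k r"
    unfolding f_norm2_def f_inner_def sum_subtractf[symmetric]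
    by (intro sum.cong refl) (simp add: r_def power2_eq_square algebra_simps)
  ultimately have "f_norm2 r = 0" by simp
  thus ?thesis using f_norm2_eq_0_imp[OF _ x, of r] by (simp add: r_def)
qed

lemma eigenvalues_negQ_iff:
  "l \<in> eigenvalues_negQ p f \<longleftrightarrow> (\<exists>v. (\<exists>x\<in>\<X>. v x \<noteq> 0) \<and> (\<forall>x\<in>\<X>. generator v x = l * v x))"
  by (simp add: eigenvalues_negQ_def minus_tgs_Q_apply)

lemma rayleigh_eigenfunction:
  obtains lam v0 where "0 < lam" "\<exists>x\<in>\<X>. v0 x \<noteq> 0" "\<And>x. x \<in> \<X> \<Longrightarrow> generator v0 x = lam * v0 x"
    "\<And>w. f_mean w = 0 \<Longrightarrow> lam * f_norm2 w \<le> dirichlet w w"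
proof -
  obtain v0 where mean_v0: "f_mean v0 = 0" and norm_v0: "f_norm2 v0 = 1"
    and min: "\<And>w. f_mean w = 0 \<Longrightarrow> dirichlet v0 v0 * f_norm2 w \<le> dirichlet w w"
    using rayleigh_minimiser by blast
  define lam where "lam = dirichlet v0 v0"
  have weak: "dirichlet v0 w = f_inner (\<lambda>x. lam * v0 x) w" if "f_mean w = 0" for w
  proof -
    have "0 \<le> (2 * dirichlet v0 w - 2 * lam * f_inner v0 w) * t + (dirichlet w w - lam * f_norm2 w) * t^2"
      for t
    proof -
      have "f_mean (\<lambda>x. v0 x + t * w x) = 0" using mean_v0 that by (simp add: f_mean_add_scaled)
      from min[OF this] show ?thesis
        by (simp add: dirichlet_add_scaled f_norm2_add_scaled norm_v0 lam_def algebra_simps)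
    qed
    from linear_coeff_eq_0_if_quadratic_nonneg[OF this]
    have "dirichlet v0 w = lam * f_inner v0 w" by simp
    thus ?thesis by (simp add: f_inner_def sum_distrib_left algebra_simps)
  qed
  have eigen: "generator v0 x = lam * v0 x" if "x \<in> \<X>" for x
    by (rule generator_eq_if_weak_solution[OF _ weak that]) (simp_all add: f_mean_scaled mean_v0)
  have nonzero: "\<exists>x\<in>\<X>. v0 x \<noteq> 0"
  proof (rule ccontr)
    assume "\<not> (\<exists>x\<in>\<X>. v0 x \<noteq> 0)"
    hence "f_norm2 v0 = 0" by (simp add: f_norm2_def)
    thus False using norm_v0 by simp
  qed
  have "lam \<noteq> 0"
  proof
    assume "lam = 0"
    obtain x where x: "x \<in> \<X>" "v0 x \<noteq> 0" using nonzero by blast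
    have "v0 y = v0 x" if "y \<in> \<X>" for y
      using dirichlet_eq_0_imp_eq[of v0 y x] \<open>lam = 0\<close> that x(1) by (simp add: lam_def)
    hence "f_mean v0 = v0 x" by (simp add: f_mean_def sum_distrib_right[symmetric] sum_f)
    thus False using mean_v0 x(2) by simp
  qed
  hence "0 < lam" using dirichlet_nonneg[of v0] by (simp add: lam_def)
  show ?thesis
  proof (rule that[OF \<open>0 < lam\<close> nonzero])
    show "generator v0 x = lam * v0 x" if "x \<in> \<X>" for x using eigen[OF that] .
    show "lam * f_norm2 w \<le> dirichlet w w" if "f_mean w = 0" for w unfolding lam_def by (rule min[OF that])
  qed
qed

lemma eigenvalue_ge_poincare_constant:
  assumes poincare: "\<And>w. f_mean w = 0 \<Longrightarrow> lam * f_norm2 w \<le> dirichlet w w"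
    and "l \<in> eigenvalues_negQ p f" "l \<noteq> 0"
  shows "lam \<le> l"
proof -
  obtain v where nonzero: "\<exists>x\<in>\<X>. v x \<noteq> 0" and eigen: "\<forall>x\<in>\<X>. generator v x = l * v x"
    using assms(2) eigenvalues_negQ_iff by blast
  have "l * f_mean v = f_mean (generator v)"
    using eigen by (simp add: f_mean_def sum_distrib_left algebra_simps)
  hence "f_mean v = 0" using f_mean_generator[of v] \<open>l \<noteq> 0\<close> by simp
  moreover have "dirichlet v v = l * f_norm2 v"
    using eigen by (simp add: dirichlet_def f_inner_def f_norm2_def sum_distrib_left power2_eq_square
        algebra_simps)
  moreover have "0 < f_norm2 v" using nonzero f_norm2_pos by blast
  ultimately show ?thesis using poincare[of v] by simp
qed

(* gap is a Min, which carries no information on an infinite set. *)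
lemma finite_eigenvalues_negQ: "finite (eigenvalues_negQ p f)"
proof -
  define N where "N = card \<X>"
  obtain e where e: "bij_betw e {0..<N} \<X>"
    using ex_bij_betw_nat_finite[OF finite_states[of p]] unfolding N_def by blast
  define M where "M = mat N N (\<lambda>(i, j). - tgs_Q p f (e i) (e j))"
  have M: "M \<in> carrier_mat N N" by (simp add: M_def)
  have "eigenvalues_negQ p f \<subseteq> {x. poly (char_poly M) x = 0}"
  proof
    fix l assume "l \<in> eigenvalues_negQ p f"
    then obtain v where nonzero: "\<exists>x\<in>\<X>. v x \<noteq> 0"
      and eigen: "\<And>x. x \<in> \<X> \<Longrightarrow> - (\<Sum>y\<in>\<X>. tgs_Q p f x y * v y) = l * v x"
      unfolding eigenvalues_negQ_def by blast
    define w where "w = vec N (\<lambda>i. v (e i))"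
    have w: "w \<in> carrier_vec N" by (simp add: w_def)
    have "w \<noteq> 0\<^sub>v N"
    proof
      assume w0: "w = 0\<^sub>v N"
      obtain x where x: "x \<in> \<X>" "v x \<noteq> 0" using nonzero by blast
      have "x \<in> e ` {0..<N}" using e x(1) by (simp add: bij_betw_def)
      then obtain i where i: "i < N" "e i = x" by auto
      have "w $ i = 0" using w0 i by simp
      thus False using i x by (simp add: w_def)
    qed
    moreover have "M *\<^sub>v w = l \<cdot>\<^sub>v w"
    proof (rule eq_vecI)
      fix i assume "i < dim_vec (l \<cdot>\<^sub>v w)"
      hence i: "i < N" by (simp add: w_def)
      have "(M *\<^sub>v w) $ i = (\<Sum>j = 0..<N. - tgs_Q p f (e i) (e j) * v (e j))"
        using i by (simp add: M_def w_def scalar_prod_def)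
      also have "\<dots> = - (\<Sum>y\<in>\<X>. tgs_Q p f (e i) y * v y)"
        using sum.reindex_bij_betw[OF e, of "\<lambda>y. tgs_Q p f (e i) y * v y"] by (simp add: sum_negf)
      also have "\<dots> = l * v (e i)"
        using e i by (intro eigen) (auto simp: bij_betw_def)
      finally show "(M *\<^sub>v w) $ i = (l \<cdot>\<^sub>v w) $ i" using i by (simp add: w_def)
    qed (simp add: M_def w_def)
    ultimately have "eigenvalue M l" unfolding eigenvalue_def eigenvector_def using w M by auto
    thus "l \<in> {x. poly (char_poly M) x = 0}" using eigenvalue_root_char_poly[OF M] by simp
  qed
  moreover have "char_poly M \<noteq> 0" using degree_monic_char_poly[OF M] by auto
  ultimately show ?thesis using poly_roots_finite finite_subset by blast
qed

lemma spectral_gap: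
  obtains lam where "0 < lam" "gap p f = lam"
    "\<And>w. f_mean w = 0 \<Longrightarrow> lam * f_norm2 w \<le> dirichlet w w"
proof -
  obtain lam v0 where "0 < lam" "\<exists>x\<in>\<X>. v0 x \<noteq> 0" "\<And>x. x \<in> \<X> \<Longrightarrow> generator v0 x = lam * v0 x"
    and poincare: "\<And>w. f_mean w = 0 \<Longrightarrow> lam * f_norm2 w \<le> dirichlet w w"
    using rayleigh_eigenfunction by blast
  hence "lam \<in> eigenvalues_negQ p f" by (auto simp: eigenvalues_negQ_iff)
  have "gap p f = lam" unfolding gap_def
  proof (rule Min_eqI)
    show "finite (eigenvalues_negQ p f - {0})" using finite_eigenvalues_negQ by simp
    show "lam \<le> l" if "l \<in> eigenvalues_negQ p f - {0}" for l
      using eigenvalue_ge_poincare_constant[OF poincare] that by blast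
    show "lam \<in> eigenvalues_negQ p f - {0}" using \<open>lam \<in> eigenvalues_negQ p f\<close> \<open>0 < lam\<close> by simp
  qed
  with \<open>0 < lam\<close> poincare that show ?thesis by blast
qed

lemma poisson_solvable:
  assumes mean_k: "f_mean k = 0"
  obtains u where "\<And>x. x \<in> \<X> \<Longrightarrow> generator u x = k x"
proof -
  obtain lam where "0 < lam" and poincare: "\<And>w. f_mean w = 0 \<Longrightarrow> lam * f_norm2 w \<le> dirichlet w w"
    using spectral_gap by blast
  define J where "J u = dirichlet u u - 2 * f_inner k u" for u
  define R where "R = 4 * f_norm2 k / lam^2 + 1"
  obtain u0 where u0: "f_mean u0 = 0 \<and> f_norm2 u0 \<le> R"
    and min: "\<And>v. f_mean v = 0 \<and> f_norm2 v \<le> R \<Longrightarrow> J u0 \<le> J v"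
  proof (rule exists_minimiser[where \<Phi>="\<lambda>v. f_mean v = 0 \<and> f_norm2 v \<le> R" and R=R and v_init="\<lambda>_. 0"])
    show "continuous_on UNIV J"
      unfolding J_def by (intro continuous_intros continuous_on_dirichlet continuous_on_f_inner)
    show "closed {v. f_mean v = 0 \<and> f_norm2 v \<le> R}"
      by (intro closed_Collect_conj closed_Collect_eq closed_Collect_le continuous_on_f_mean
          continuous_on_f_norm2 continuous_on_const)
    show "J v = J w" if "\<And>x. x \<in> \<X> \<Longrightarrow> v x = w x" for v w
      using that dirichlet_cong[OF that] by (simp add: J_def f_inner_def)
    show "f_mean w = 0 \<and> f_norm2 w \<le> R" if "\<And>x. x \<in> \<X> \<Longrightarrow> v x = w x" "f_mean v = 0 \<and> f_norm2 v \<le> R"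
      for v w
      using that by (simp add: f_mean_def f_norm2_def)
    show "f_mean (\<lambda>_. 0) = 0 \<and> f_norm2 (\<lambda>_. 0) \<le> R"
      using f_norm2_nonneg[of k] \<open>0 < lam\<close> by (simp add: f_mean_def f_norm2_def R_def add_nonneg_pos)
    show "f_norm2 v \<le> R" if "f_mean v = 0 \<and> f_norm2 v \<le> R" for v
      using that by blast
  qed blast
  have global_min: "J u0 \<le> J w" if "f_mean w = 0" for w
  proof (cases "f_norm2 w \<le> R")
    case True thus ?thesis using min that by blast
  next
    case False
    have "J u0 \<le> J (\<lambda>_. 0)"
      using min f_norm2_nonneg[of k] \<open>0 < lam\<close> by (simp add: f_mean_def f_norm2_def R_def add_nonneg_pos)
    hence "J u0 \<le> 0" by (simp add: J_def dirichlet_def f_inner_def)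
    have "lam / 2 * R = 2 * f_norm2 k / lam + lam / 2"
      using \<open>0 < lam\<close> by (simp add: R_def power2_eq_square field_simps)
    moreover have "lam / 2 * R < lam / 2 * f_norm2 w" using False \<open>0 < lam\<close> by simp
    ultimately have "2 * f_norm2 k / lam + lam / 2 < lam / 2 * f_norm2 w" by linarith
    moreover have "2 * (lam / 2 * f_norm2 w) \<le> dirichlet w w" using poincare[OF that] by simp
    moreover have "2 * f_inner k w \<le> lam / 2 * f_norm2 w + 2 * f_norm2 k / lam"
      using two_f_inner_le[of "lam / 2" k w] \<open>0 < lam\<close> by (simp add: mult.commute)
    ultimately have "0 < J w" using \<open>0 < lam\<close> unfolding J_def by linarith
    thus ?thesis using \<open>J u0 \<le> 0\<close> by simp
  qed
  have weak: "dirichlet u0 w = f_inner k w" if "f_mean w = 0" for w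
  proof -
    have "0 \<le> (2 * dirichlet u0 w - 2 * f_inner k w) * t + dirichlet w w * t^2" for t
    proof -
      have "f_mean (\<lambda>x. u0 x + t * w x) = 0" using u0 that by (simp add: f_mean_add_scaled)
      from global_min[OF this] show ?thesis
        by (simp add: J_def dirichlet_add_scaled f_inner_add_scaled algebra_simps)
    qed
    from linear_coeff_eq_0_if_quadratic_nonneg[OF this] show ?thesis by simp
  qed
  show ?thesis using generator_eq_if_weak_solution[OF mean_k weak] that by blast
qed


section \<open>Martingale decomposition along stationary paths\<close>

abbreviation expect :: "nat \<Rightarrow> (bool list list \<Rightarrow> real) \<Rightarrow> real" where
  "expect n F \<equiv> path_expect p f n F"

lemma paths_in_states: "ps \<in> paths p n \<Longrightarrow> x \<in> set ps \<Longrightarrow> x \<in> \<X>"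
  by (auto simp: paths_def)

lemma paths_nonempty: "ps \<in> paths p n \<Longrightarrow> 1 \<le> n \<Longrightarrow> ps \<noteq> []"
  by (auto simp: paths_def)

lemma last_path_in_states: "ps \<in> paths p n \<Longrightarrow> 1 \<le> n \<Longrightarrow> last ps \<in> \<X>"
  using paths_in_states paths_nonempty last_in_set by blast

lemma hd_path_in_states: "ps \<in> paths p n \<Longrightarrow> 1 \<le> n \<Longrightarrow> hd ps \<in> \<X>"
  using paths_in_states paths_nonempty hd_in_set by blast

lemma path_expect_Suc:
  assumes "1 \<le> n"
  shows "expect (Suc n) H = expect n (\<lambda>ps. \<Sum>x\<in>\<X>. tgs_P p f (last ps) x * H (ps @ [x]))"
proof -
  have "expect (Suc n) H = (\<Sum>ps\<in>paths p n. \<Sum>x\<in>\<X>. path_prob p f (ps @ [x]) * H (ps @ [x]))"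
    unfolding path_expect_def paths_Suc
    by (subst sum.reindex) (auto simp: inj_on_def case_prod_beta sum.cartesian_product)
  also have "\<dots> = expect n (\<lambda>ps. \<Sum>x\<in>\<X>. tgs_P p f (last ps) x * H (ps @ [x]))"
    unfolding path_expect_def using paths_nonempty[OF _ assms]
    by (intro sum.cong refl) (simp add: path_prob_snoc sum_distrib_left mult.assoc)
  finally show ?thesis .
qed

lemma path_expect_one: "expect 1 H = (\<Sum>x\<in>\<X>. tgs_stat p f x * H [x])"
proof -
  have "paths p 1 = (\<lambda>x. [x]) ` \<X>"
    by (auto simp: paths_def length_Suc_conv)
  thus ?thesis unfolding path_expect_def
    by (simp add: sum.reindex inj_on_def path_prob_def)
qed

lemma path_prob_nonneg:
  assumes ps: "ps \<in> paths p n" and "1 \<le> n"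
  shows "0 \<le> path_prob p f ps"
proof -
  have "ps ! t \<in> \<X>" if "t < length ps" for t using paths_in_states[OF ps] that by simp
  thus ?thesis using ps assms(2) unfolding path_prob_def
    by (intro mult_nonneg_nonneg tgs_stat_nonneg prod_nonneg tgs_P_nonneg) (auto simp: paths_def)
qed

lemma path_expect_mono:
  assumes "1 \<le> n" "\<And>ps. ps \<in> paths p n \<Longrightarrow> F ps \<le> G ps"
  shows "expect n F \<le> expect n G"
  unfolding path_expect_def
  by (intro sum_mono mult_left_mono assms(2) path_prob_nonneg[OF _ assms(1)])

lemma path_expect_last:
  assumes "1 \<le> n"
  shows "expect n (\<lambda>ps. g (last ps)) = (\<Sum>x\<in>\<X>. tgs_stat p f x * g x)"
  using assms
proof (induction n arbitrary: g rule: dec_induct)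
  case base
  show ?case using path_expect_one[of "\<lambda>ps. g (last ps)"] by simp
next
  case (step n)
  have "expect (Suc n) (\<lambda>ps. g (last ps)) = expect n (\<lambda>ps. P_apply g (last ps))"
    by (simp add: path_expect_Suc[OF step(1)] P_apply_def)
  also have "\<dots> = (\<Sum>x\<in>\<X>. tgs_stat p f x * g x)"
    by (simp add: step.IH P_apply_stationary)
  finally show ?case .
qed

lemma path_expect_const: "1 \<le> n \<Longrightarrow> expect n (\<lambda>_. c) = c"
  using path_expect_last[of n "\<lambda>_. c"] by (simp add: sum_distrib_right[symmetric] sum_tgs_stat)

lemma abs_path_expect_le:
  assumes "1 \<le> n"
  shows "\<bar>expect n F\<bar> \<le> expect n (\<lambda>ps. \<bar>F ps\<bar>)"
proof -
  have "expect n F \<le> expect n (\<lambda>ps. \<bar>F ps\<bar>)" by (rule path_expect_mono[OF assms]) simp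
  moreover have "expect n (\<lambda>ps. - F ps) \<le> expect n (\<lambda>ps. \<bar>F ps\<bar>)"
    by (rule path_expect_mono[OF assms]) simp
  ultimately show ?thesis using path_expect_scaled[of p f n "-1" F] by simp
qed

lemma path_expect_abs_mult_le:
  assumes "1 \<le> n" "0 < t"
  shows "expect n (\<lambda>ps. \<bar>F ps * G ps\<bar>)
         \<le> 1 / (2 * t) * expect n (\<lambda>ps. (F ps)^2) + t / 2 * expect n (\<lambda>ps. (G ps)^2)"
proof -
  have "expect n (\<lambda>ps. \<bar>F ps * G ps\<bar>) \<le> expect n (\<lambda>ps. 1 / (2 * t) * (F ps)^2 + t / 2 * (G ps)^2)"
    using abs_mult_le_weighted_squares[OF assms(2)] by (intro path_expect_mono[OF assms(1)])
  thus ?thesis by (simp only: path_expect_add path_expect_scaled)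
qed

definition path_sum :: "(bool list \<Rightarrow> real) \<Rightarrow> bool list list \<Rightarrow> real" where
  "path_sum g ps = (\<Sum>t<length ps. g (ps ! t))"

definition innovation :: "(bool list \<Rightarrow> real) \<Rightarrow> bool list \<Rightarrow> bool list \<Rightarrow> real" where
  "innovation u a x = u x - P_apply u a"

definition martingale :: "(bool list \<Rightarrow> real) \<Rightarrow> bool list list \<Rightarrow> real" where
  "martingale u ps = (\<Sum>t\<in>{1..<length ps}. innovation u (ps ! (t - 1)) (ps ! t))"

(* The variance sigma^2 of the martingale central limit theorem. *)
definition innovation_var :: "(bool list \<Rightarrow> real) \<Rightarrow> real" where
  "innovation_var u = (\<Sum>a\<in>\<X>. tgs_stat p f a * (\<Sum>x\<in>\<X>. tgs_P p f a x * (innovation u a x)^2))"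

lemma path_sum_snoc: "path_sum g (ps @ [x]) = path_sum g ps + g x"
  by (simp add: path_sum_def nth_append)

lemma path_sum_cong: "(\<And>x. x \<in> set ps \<Longrightarrow> g x = g' x) \<Longrightarrow> path_sum g ps = path_sum g' ps"
  unfolding path_sum_def by (intro sum.cong refl) auto

lemma martingale_snoc:
  assumes "ps \<noteq> []"
  shows "martingale u (ps @ [x]) = martingale u ps + innovation u (last ps) x"
proof -
  obtain m where m: "length ps = Suc m" using assms by (cases ps) auto
  have "martingale u (ps @ [x])
      = (\<Sum>t\<in>{1..<Suc m}. innovation u ((ps @ [x]) ! (t - 1)) ((ps @ [x]) ! t))
        + innovation u ((ps @ [x]) ! m) ((ps @ [x]) ! Suc m)"
    using m by (simp add: martingale_def)
  also have "(\<Sum>t\<in>{1..<Suc m}. innovation u ((ps @ [x]) ! (t - 1)) ((ps @ [x]) ! t)) = martingale u ps"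
    unfolding martingale_def m by (intro sum.cong refl) (auto simp: nth_append m)
  also have "(ps @ [x]) ! m = last ps" using m assms by (simp add: nth_append last_conv_nth)
  finally show ?thesis using m by (simp add: nth_append)
qed

lemma path_sum_poisson_decomp:
  "ps \<noteq> [] \<Longrightarrow> path_sum (\<lambda>x. u x - P_apply u x) ps = u (hd ps) - P_apply u (last ps) + martingale u ps"
proof (induction ps rule: rev_induct)
  case (snoc x ps)
  show ?case
  proof (cases "ps = []")
    case True thus ?thesis by (simp add: path_sum_def martingale_def)
  next
    case False
    thus ?thesis using snoc.IH by (simp add: path_sum_snoc martingale_snoc innovation_def)
  qed
qed simp

lemma sum_tgs_P_mult_innovation: "a \<in> \<X> \<Longrightarrow> (\<Sum>x\<in>\<X>. tgs_P p f a x * innovation u a x) = 0"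
  by (simp add: innovation_def right_diff_distrib sum_subtractf sum_tgs_P P_apply_def
      flip: sum_distrib_right)

lemma P_apply_abs_le:
  assumes "\<And>x. x \<in> \<X> \<Longrightarrow> \<bar>u x\<bar> \<le> U" "a \<in> \<X>"
  shows "\<bar>P_apply u a\<bar> \<le> U"
proof -
  have "\<bar>P_apply u a\<bar> \<le> (\<Sum>y\<in>\<X>. \<bar>tgs_P p f a y * u y\<bar>)"
    unfolding P_apply_def by (rule sum_abs)
  also have "\<dots> = (\<Sum>y\<in>\<X>. tgs_P p f a y * \<bar>u y\<bar>)"
    using tgs_P_nonneg[OF assms(2)] by (simp add: abs_mult)
  also have "\<dots> \<le> U"
    using assms by (intro weighted_average_le tgs_P_nonneg sum_tgs_P)
  finally show ?thesis .
qed

lemma innovation_abs_le: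
  assumes "\<And>x. x \<in> \<X> \<Longrightarrow> \<bar>u x\<bar> \<le> U" "a \<in> \<X>" "x \<in> \<X>"
  shows "\<bar>innovation u a x\<bar> \<le> 2 * U"
proof -
  have "\<bar>P_apply u a\<bar> \<le> U" by (rule P_apply_abs_le) (use assms in auto)
  thus ?thesis using abs_triangle_ineq4[of "u x" "P_apply u a"] assms(1)[OF assms(3)]
    by (simp add: innovation_def)
qed

lemma bound_nonneg: "(\<And>x. x \<in> \<X> \<Longrightarrow> \<bar>u x\<bar> \<le> (U :: real)) \<Longrightarrow> 0 \<le> U"
  using abs_ge_zero order_trans[of 0 "\<bar>u (replicate p False)\<bar>" U] by (simp add: states_def)

lemma path_expect_path_sum:
  assumes "1 \<le> n"
  shows "expect n (path_sum g) = n * (\<Sum>x\<in>\<X>. tgs_stat p f x * g x)"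
  using assms
proof (induction n rule: dec_induct)
  case base
  have "path_sum g [x] = g x" for x by (simp add: path_sum_def)
  thus ?case using path_expect_one[of "path_sum g"] by simp
next
  case (step n)
  have "expect (Suc n) (path_sum g) = expect n (\<lambda>ps. path_sum g ps + P_apply g (last ps))"
    unfolding path_expect_Suc[OF step(1)]
  proof (rule path_expect_cong)
    fix ps assume "ps \<in> paths p n"
    hence "last ps \<in> \<X>" using last_path_in_states step(1) by blast
    thus "(\<Sum>x\<in>\<X>. tgs_P p f (last ps) x * path_sum g (ps @ [x])) = path_sum g ps + P_apply g (last ps)"
      by (simp add: path_sum_snoc P_apply_def distrib_left sum.distrib sum_tgs_P flip: sum_distrib_right)
  qed
  also have "\<dots> = (Suc n) * (\<Sum>x\<in>\<X>. tgs_stat p f x * g x)"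
    by (simp add: path_expect_add step.IH path_expect_last[OF step(1)] P_apply_stationary algebra_simps)
  finally show ?case .
qed

lemma path_expect_martingale_sq:
  assumes "1 \<le> n"
  shows "expect n (\<lambda>ps. (martingale u ps)^2) = (real n - 1) * innovation_var u"
  using assms
proof (induction n rule: dec_induct)
  case base
  show ?case using path_expect_one[of "\<lambda>ps. (martingale u ps)^2"] by (simp add: martingale_def)
next
  case (step n)
  define local_var where "local_var a = (\<Sum>x\<in>\<X>. tgs_P p f a x * (innovation u a x)^2)" for a
  have "expect (Suc n) (\<lambda>ps. (martingale u ps)^2)
      = expect n (\<lambda>ps. (martingale u ps)^2 + local_var (last ps))"
    unfolding path_expect_Suc[OF step(1)]
  proof (rule path_expect_cong)
    fix ps assume ps: "ps \<in> paths p n"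
    have a: "last ps \<in> \<X>" using last_path_in_states[OF ps step(1)] .
    have "(\<Sum>x\<in>\<X>. tgs_P p f (last ps) x * (martingale u (ps @ [x]))^2)
        = (\<Sum>x\<in>\<X>. tgs_P p f (last ps) x) * (martingale u ps)^2
          + 2 * martingale u ps * (\<Sum>x\<in>\<X>. tgs_P p f (last ps) x * innovation u (last ps) x)
          + local_var (last ps)"
      by (simp add: martingale_snoc[OF paths_nonempty[OF ps step(1)]] local_var_def power2_eq_square
          sum.distrib sum_distrib_left sum_distrib_right algebra_simps)
    thus "(\<Sum>x\<in>\<X>. tgs_P p f (last ps) x * (martingale u (ps @ [x]))^2)
        = (martingale u ps)^2 + local_var (last ps)"
      by (simp add: sum_tgs_P[OF a] sum_tgs_P_mult_innovation[OF a])
  qed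
  also have "\<dots> = (real n - 1) * innovation_var u + innovation_var u"
    unfolding path_expect_add step.IH path_expect_last[OF step(1)]
    by (simp add: local_var_def innovation_var_def)
  also have "\<dots> = (real (Suc n) - 1) * innovation_var u"
    by (simp add: algebra_simps)
  finally show ?case .
qed

lemma innovation_var_bounds:
  assumes U: "\<And>x. x \<in> \<X> \<Longrightarrow> \<bar>u x\<bar> \<le> U"
  shows "0 \<le> innovation_var u" "innovation_var u \<le> (2 * U)^2"
proof -
  have local_var_le: "(\<Sum>x\<in>\<X>. tgs_P p f a x * (innovation u a x)^2) \<le> (2 * U)^2"
    if a: "a \<in> \<X>" for a
  proof (rule weighted_average_le[OF tgs_P_nonneg[OF a] sum_tgs_P[OF a]])
    fix x assume "x \<in> \<X>"
    thus "(innovation u a x)^2 \<le> (2 * U)^2"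
      using innovation_abs_le[of u U a, OF U a] bound_nonneg[of u U, OF U]
      by (subst power2_le_iff_abs_le) simp_all
  qed
  show "0 \<le> innovation_var u"
    unfolding innovation_var_def
    by (intro sum_nonneg mult_nonneg_nonneg[OF tgs_stat_nonneg]) (simp_all add: tgs_P_nonneg)
  show "innovation_var u \<le> (2 * U)^2"
    unfolding innovation_var_def
    by (rule weighted_average_le[OF tgs_stat_nonneg sum_tgs_stat local_var_le])
qed

lemma path_expect_martingale_pow4_le:
  assumes U: "\<And>x. x \<in> \<X> \<Longrightarrow> \<bar>u x\<bar> \<le> U" and "1 \<le> n"
  defines "K \<equiv> 2 * U"
  shows "expect n (\<lambda>ps. (martingale u ps)^4) \<le> (2 * K^3 + 6 * K^4 + 2 * K^5) * (real n)^2"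
  using \<open>1 \<le> n\<close>
proof (induction n rule: dec_induct)
  case base
  show ?case
    using path_expect_one[of "\<lambda>ps. (martingale u ps)^4"] bound_nonneg[OF U]
    by (simp add: martingale_def K_def)
next
  case (step n)
  define A where "A = 2 * K^3 + 6 * K^4 + 2 * K^5"
  have "0 \<le> K" using bound_nonneg[OF U] by (simp add: K_def)
  have "expect (Suc n) (\<lambda>ps. (martingale u ps)^4)
      \<le> expect n (\<lambda>ps. (martingale u ps)^4 + (6 * K^2 + 2 * K^3) * (martingale u ps)^2 + (2 * K^3 + K^4))"
    unfolding path_expect_Suc[OF step(1)]
  proof (rule path_expect_mono[OF step(1)])
    fix ps assume ps: "ps \<in> paths p n"
    have a: "last ps \<in> \<X>" using last_path_in_states[OF ps step(1)] .
    have "(\<Sum>x\<in>\<X>. tgs_P p f (last ps) x * (martingale u (ps @ [x]))^4)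
        = (\<Sum>x\<in>\<X>. tgs_P p f (last ps) x * (martingale u ps + innovation u (last ps) x)^4)"
      by (simp add: martingale_snoc[OF paths_nonempty[OF ps step(1)]])
    also have "\<dots> \<le> (martingale u ps)^4 + (6 * K^2 + 2 * K^3) * (martingale u ps)^2 + 2 * K^3 + K^4"
      by (rule weighted_fourth_moment_le[OF tgs_P_nonneg[OF a] sum_tgs_P[OF a]
            sum_tgs_P_mult_innovation[OF a]])
         (use innovation_abs_le[of u U "last ps", OF U a] in \<open>simp add: K_def\<close>)
    finally show "(\<Sum>x\<in>\<X>. tgs_P p f (last ps) x * (martingale u (ps @ [x]))^4)
        \<le> (martingale u ps)^4 + (6 * K^2 + 2 * K^3) * (martingale u ps)^2 + (2 * K^3 + K^4)"
      by simp
  qed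
  also have "\<dots> = expect n (\<lambda>ps. (martingale u ps)^4)
      + (6 * K^2 + 2 * K^3) * expect n (\<lambda>ps. (martingale u ps)^2) + (2 * K^3 + K^4)"
    by (simp only: path_expect_add path_expect_scaled path_expect_const[OF step(1)])
  also have "\<dots> \<le> A * (real n)^2 + (6 * K^2 + 2 * K^3) * (n * K^2) + (2 * K^3 + K^4)"
  proof -
    have "expect n (\<lambda>ps. (martingale u ps)^2) \<le> n * K^2"
      using innovation_var_bounds[OF U] step(1)
      by (simp add: path_expect_martingale_sq[OF step(1)] K_def mult_mono)
    thus ?thesis using step.IH \<open>0 \<le> K\<close> by (simp add: A_def mult_left_mono add_mono)
  qed
  also have "\<dots> \<le> A * (real (Suc n))^2"
  proof -
    have "(6 * K^2 + 2 * K^3) * (n * K^2) = (6 * K^4 + 2 * K^5) * n"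
      by (simp add: power2_eq_square power3_eq_cube power4_eq_xxxx algebra_simps eval_nat_numeral)
    also have "\<dots> \<le> A * n" using \<open>0 \<le> K\<close> by (intro mult_right_mono) (simp_all add: A_def)
    finally have "(6 * K^2 + 2 * K^3) * (n * K^2) \<le> A * n" .
    moreover have "2 * K^3 + K^4 \<le> A" using \<open>0 \<le> K\<close> by (simp add: A_def)
    moreover have "0 \<le> A * n" using \<open>0 \<le> K\<close> by (simp add: A_def)
    ultimately show ?thesis by (simp add: power2_eq_square algebra_simps)
  qed
  finally show ?case by (simp add: A_def)
qed

lemma poisson_boundary_abs_le:
  assumes U: "\<And>x. x \<in> \<X> \<Longrightarrow> \<bar>u x\<bar> \<le> U" and "ps \<in> paths p n" "1 \<le> n"
  shows "\<bar>u (hd ps) - P_apply u (last ps)\<bar> \<le> 2 * U"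
proof -
  have "\<bar>P_apply u (last ps)\<bar> \<le> U" by (rule P_apply_abs_le[OF U last_path_in_states[OF assms(2,3)]])
  thus ?thesis using U[OF hd_path_in_states[OF assms(2,3)]] abs_triangle_ineq4[of "u (hd ps)"] by linarith
qed

lemma path_expect_poisson_sum_sq_le:
  assumes U: "\<And>x. x \<in> \<X> \<Longrightarrow> \<bar>u x\<bar> \<le> U" and n: "1 \<le> n"
  shows "expect n (\<lambda>ps. (path_sum (\<lambda>x. u x - P_apply u x) ps)^2) \<le> 16 * U^2 * n"
proof -
  have "expect n (\<lambda>ps. (path_sum (\<lambda>x. u x - P_apply u x) ps)^2)
      \<le> expect n (\<lambda>ps. 8 * U^2 + 2 * (martingale u ps)^2)"
  proof (rule path_expect_mono[OF n])
    fix ps assume ps: "ps \<in> paths p n"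
    define a where "a = u (hd ps) - P_apply u (last ps)"
    have "a^2 \<le> (2 * U)^2"
      using poisson_boundary_abs_le[OF U ps n] bound_nonneg[OF U]
      by (subst power2_le_iff_abs_le) (simp_all add: a_def)
    thus "(path_sum (\<lambda>x. u x - P_apply u x) ps)^2 \<le> 8 * U^2 + 2 * (martingale u ps)^2"
      using square_sum_le[of a "martingale u ps"]
      by (simp add: path_sum_poisson_decomp[OF paths_nonempty[OF ps n]] a_def)
  qed
  also have "\<dots> = 8 * U^2 + 2 * ((real n - 1) * innovation_var u)"
    by (simp add: path_expect_add path_expect_scaled path_expect_const[OF n] path_expect_martingale_sq[OF n])
  also have "\<dots> \<le> 8 * U^2 * n + 8 * U^2 * n"
  proof (rule add_mono)
    show "8 * U^2 \<le> 8 * U^2 * n" using n mult_left_mono[of 1 "real n" "8 * U^2"] by simp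
    have "(real n - 1) * innovation_var u \<le> n * (4 * U^2)"
      using innovation_var_bounds[of u U, OF U] n by (intro mult_mono) auto
    thus "2 * ((real n - 1) * innovation_var u) \<le> 8 * U^2 * n" by (simp add: algebra_simps)
  qed
  finally show ?thesis by (simp add: algebra_simps)
qed


lemma path_expect_poisson_sum_pow4_le:
  assumes U: "\<And>x. x \<in> \<X> \<Longrightarrow> \<bar>u x\<bar> \<le> U"
  obtains C where "\<And>n. 1 \<le> n \<Longrightarrow> expect n (\<lambda>ps. (path_sum (\<lambda>x. u x - P_apply u x) ps)^4) \<le> C * (real n)^2"
proof -
  define K where "K = 2 * U"
  have "0 \<le> K" using bound_nonneg[of u U, OF U] by (simp add: K_def)
  have bound: "expect n (\<lambda>ps. (path_sum (\<lambda>x. u x - P_apply u x) ps)^4)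
      \<le> (8 * K^4 + 8 * (2 * K^3 + 6 * K^4 + 2 * K^5)) * (real n)^2" if n: "1 \<le> n" for n
  proof -
  have "expect n (\<lambda>ps. (path_sum (\<lambda>x. u x - P_apply u x) ps)^4)
      \<le> expect n (\<lambda>ps. 8 * K^4 + 8 * (martingale u ps)^4)"
  proof (rule path_expect_mono[OF n])
    fix ps assume ps: "ps \<in> paths p n"
    define a where "a = u (hd ps) - P_apply u (last ps)"
    have "\<bar>a\<bar> \<le> K" using poisson_boundary_abs_le[OF U ps n] by (simp add: a_def K_def)
    hence "\<bar>a\<bar>^4 \<le> K^4" by (intro power_mono) auto
    hence "a^4 \<le> K^4" by (simp add: power_even_abs)
    thus "(path_sum (\<lambda>x. u x - P_apply u x) ps)^4 \<le> 8 * K^4 + 8 * (martingale u ps)^4"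
      using power4_sum_le[of a "martingale u ps"]
      by (simp add: path_sum_poisson_decomp[OF paths_nonempty[OF ps n]] a_def)
  qed
  also have "\<dots> = 8 * K^4 + 8 * expect n (\<lambda>ps. (martingale u ps)^4)"
    by (simp add: path_expect_add path_expect_scaled path_expect_const[OF n])
  also have "\<dots> \<le> 8 * K^4 * (real n)^2 + 8 * ((2 * K^3 + 6 * K^4 + 2 * K^5) * (real n)^2)"
  proof -
    have "8 * K^4 \<le> 8 * K^4 * (real n)^2"
      using n \<open>0 \<le> K\<close> mult_left_mono[of 1 "(real n)^2" "8 * K^4"] by simp
    moreover have "expect n (\<lambda>ps. (martingale u ps)^4) \<le> (2 * K^3 + 6 * K^4 + 2 * K^5) * (real n)^2"
      using path_expect_martingale_pow4_le[of u U, OF U n] by (simp add: K_def)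
    ultimately show ?thesis by simp
  qed
  finally show ?thesis by (simp add: algebra_simps)
  qed
  show ?thesis using bound by (rule that)
qed

lemma path_expect_poisson_sum_sq_asymp:
  assumes U: "\<And>x. x \<in> \<X> \<Longrightarrow> \<bar>u x\<bar> \<le> U"
  obtains C where "\<And>n. 1 \<le> n \<Longrightarrow>
    \<bar>expect n (\<lambda>ps. (path_sum (\<lambda>x. u x - P_apply u x) ps)^2) - n * innovation_var u\<bar> \<le> C * sqrt n"
proof -
  have "0 \<le> U" using bound_nonneg[of u U, OF U] .
  have bound: "\<bar>expect n (\<lambda>ps. (path_sum (\<lambda>x. u x - P_apply u x) ps)^2) - n * innovation_var u\<bar>
      \<le> (4 * U^2 + 8 * U^3 + 2 * U) * sqrt n" if n: "1 \<le> n" for n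
  proof -
    define r where "r = sqrt n"
    have "1 \<le> r" "r * r = n" using n by (simp_all add: r_def)
    define a where "a ps = u (hd ps) - P_apply u (last ps)" for ps
    have a: "\<bar>a ps\<bar> \<le> 2 * U" if "ps \<in> paths p n" for ps
      using poisson_boundary_abs_le[OF U that n] by (simp add: a_def)
    have "expect n (\<lambda>ps. (path_sum (\<lambda>x. u x - P_apply u x) ps)^2)
        = expect n (\<lambda>ps. (a ps)^2 + 2 * (a ps * martingale u ps) + (martingale u ps)^2)"
      by (intro path_expect_cong)
         (simp add: path_sum_poisson_decomp[OF paths_nonempty[OF _ n]] a_def power2_eq_square algebra_simps)
    also have "\<dots> = expect n (\<lambda>ps. (a ps)^2) + 2 * expect n (\<lambda>ps. a ps * martingale u ps)
        + (real n - 1) * innovation_var u"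
      by (simp only: path_expect_add path_expect_scaled path_expect_martingale_sq[OF n])
    finally have decomp: "expect n (\<lambda>ps. (path_sum (\<lambda>x. u x - P_apply u x) ps)^2) - n * innovation_var u
        = expect n (\<lambda>ps. (a ps)^2) - innovation_var u + 2 * expect n (\<lambda>ps. a ps * martingale u ps)"
      by (simp add: algebra_simps)
    have "0 \<le> expect n (\<lambda>ps. (a ps)^2)"
      using path_expect_mono[OF n, of "\<lambda>_. 0"] by (simp add: path_expect_const[OF n])
    moreover have "expect n (\<lambda>ps. (a ps)^2) \<le> 4 * U^2"
    proof -
      have "expect n (\<lambda>ps. (a ps)^2) \<le> expect n (\<lambda>_. (2 * U)^2)"
      proof (rule path_expect_mono[OF n])
        fix ps assume "ps \<in> paths p n"
        thus "(a ps)^2 \<le> (2 * U)^2"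
          using a \<open>0 \<le> U\<close> by (subst power2_le_iff_abs_le) simp_all
      qed
      thus ?thesis by (simp add: path_expect_const[OF n])
    qed
    moreover have "0 \<le> innovation_var u" "innovation_var u \<le> 4 * U^2"
      using innovation_var_bounds[of u U, OF U] by simp_all
    ultimately have boundary: "\<bar>expect n (\<lambda>ps. (a ps)^2) - innovation_var u\<bar> \<le> 4 * U^2" by linarith
    have "expect n (\<lambda>ps. (martingale u ps)^2) \<le> r * r * (4 * U^2)"
      using innovation_var_bounds[of u U, OF U] n \<open>r * r = n\<close>
      by (simp add: path_expect_martingale_sq[OF n] mult_mono)
    hence "1 / (2 * r) * expect n (\<lambda>ps. (martingale u ps)^2) \<le> 2 * U^2 * r"
      using \<open>1 \<le> r\<close> by (simp add: field_simps)
    hence "expect n (\<lambda>ps. \<bar>martingale u ps * 1\<bar>) \<le> r * (2 * U^2 + 1 / 2)"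
      using path_expect_abs_mult_le[OF n, of r "martingale u" "\<lambda>_. 1"] \<open>1 \<le> r\<close>
      by (simp add: path_expect_const[OF n] algebra_simps)
    moreover have "\<bar>expect n (\<lambda>ps. a ps * martingale u ps)\<bar> \<le> 2 * U * expect n (\<lambda>ps. \<bar>martingale u ps * 1\<bar>)"
    proof -
      have "\<bar>expect n (\<lambda>ps. a ps * martingale u ps)\<bar> \<le> expect n (\<lambda>ps. \<bar>a ps * martingale u ps\<bar>)"
        by (rule abs_path_expect_le[OF n])
      also have "\<dots> \<le> expect n (\<lambda>ps. 2 * U * \<bar>martingale u ps * 1\<bar>)"
        using a by (intro path_expect_mono[OF n]) (simp add: abs_mult mult_right_mono)
      finally show ?thesis by (simp add: path_expect_scaled)
    qed
    ultimately have "\<bar>expect n (\<lambda>ps. a ps * martingale u ps)\<bar> \<le> 2 * U * (r * (2 * U^2 + 1 / 2))"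
      using \<open>0 \<le> U\<close> by (meson mult_left_mono order_trans zero_le_mult_iff zero_le_numeral)
    hence "\<bar>expect n (\<lambda>ps. (path_sum (\<lambda>x. u x - P_apply u x) ps)^2) - n * innovation_var u\<bar>
        \<le> 4 * U^2 + r * (8 * U^3 + 2 * U)"
      unfolding decomp using boundary by (simp add: power2_eq_square power3_eq_cube algebra_simps abs_le_iff)
    also have "\<dots> \<le> r * (4 * U^2) + r * (8 * U^3 + 2 * U)"
      using \<open>1 \<le> r\<close> \<open>0 \<le> U\<close> mult_right_mono[of 1 r "4 * U^2"] by simp
    finally show ?thesis by (simp add: r_def algebra_simps)
  qed
  show ?thesis using bound by (rule that)
qed

lemma exists_abs_bound:
  fixes u :: "bool list \<Rightarrow> real"
  obtains U where "\<And>x. x \<in> \<X> \<Longrightarrow> \<bar>u x\<bar> \<le> U"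
proof (rule that)
  fix x assume "x \<in> \<X>"
  thus "\<bar>u x\<bar> \<le> (\<Sum>y\<in>\<X>. \<bar>u y\<bar>)" by (intro member_le_sum) (simp_all add: finite_states)
qed

definition Z_sum :: real where
  "Z_sum = (\<Sum>x\<in>\<X>. tgs_Z p f x)"

lemma tgs_Z_le_Z_sum: "x \<in> \<X> \<Longrightarrow> tgs_Z p f x \<le> Z_sum"
  unfolding Z_sum_def by (rule member_le_sum) (auto simp: finite_states less_imp_le[OF tgs_Z_pos])

lemma Z_sum_pos: "0 < Z_sum"
  using tgs_Z_le_Z_sum[of "replicate p False"] tgs_Z_pos[of "replicate p False"] by (simp add: states_def)

lemma innovation_var_le_dirichlet: "innovation_var u \<le> 2 * dirichlet u u"
proof -
  have local_var: "(\<Sum>x\<in>\<X>. tgs_P p f a x * (innovation u a x)^2) = P_apply (\<lambda>x. (u x)^2) a - (P_apply u a)^2"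
    if "a \<in> \<X>" for a
  proof -
    define m where "m = P_apply u a"
    have "(\<Sum>x\<in>\<X>. tgs_P p f a x * (innovation u a x)^2)
        = (\<Sum>x\<in>\<X>. tgs_P p f a x * (u x)^2) - 2 * m * (\<Sum>x\<in>\<X>. tgs_P p f a x * u x)
          + m^2 * (\<Sum>x\<in>\<X>. tgs_P p f a x)"
      by (simp add: innovation_def m_def[symmetric] power2_eq_square sum_subtractf sum.distrib
          sum_distrib_left sum_distrib_right algebra_simps)
    thus ?thesis using sum_tgs_P[OF that] by (simp add: m_def P_apply_def power2_eq_square)
  qed
  have "innovation_var u = (\<Sum>a\<in>\<X>. tgs_stat p f a * ((u a)^2 - (P_apply u a)^2))"
    by (simp add: innovation_var_def local_var right_diff_distrib sum_subtractf P_apply_stationary)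
  also have "\<dots> = (\<Sum>a\<in>\<X>. 2 * (f a * generator u a * u a) - tgs_stat p f a * (u a - P_apply u a)^2)"
    by (intro sum.cong refl) (simp add: tgs_stat_eq generator_def power2_eq_square algebra_simps)
  also have "\<dots> \<le> (\<Sum>a\<in>\<X>. 2 * (f a * generator u a * u a))"
    using tgs_stat_nonneg by (intro sum_mono) simp
  also have "\<dots> = 2 * dirichlet u u"
    by (simp add: dirichlet_def f_inner_def sum_distrib_left)
  finally show ?thesis .
qed

lemma var_f_eq_f_norm2: "var_f p f h = f_norm2 (\<lambda>x. h x - f_mean h)"
proof -
  define m where "m = f_mean h"
  have "f_norm2 (\<lambda>x. h x - m)
      = (\<Sum>x\<in>\<X>. f x * (h x)^2) - 2 * m * (\<Sum>x\<in>\<X>. f x * h x) + m^2 * (\<Sum>x\<in>\<X>. f x)"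
    by (simp add: f_norm2_def power2_eq_square sum_subtractf sum.distrib sum_distrib_left
        sum_distrib_right algebra_simps)
  thus ?thesis by (simp add: var_f_def m_def f_mean_def sum_f power2_eq_square)
qed

lemma dirichlet_le_of_poisson:
  assumes generator_u: "\<And>x. x \<in> \<X> \<Longrightarrow> generator u x = k x" and "f_mean k = 0" and "0 < lam"
    and poincare: "\<And>w. f_mean w = 0 \<Longrightarrow> lam * f_norm2 w \<le> dirichlet w w"
  shows "dirichlet u u \<le> f_norm2 k / lam"
proof -
  define w where "w = (\<lambda>x. u x + (- f_mean u))"
  have "f_mean w = 0"
    by (simp add: w_def f_mean_def right_diff_distrib sum_subtractf sum_f flip: sum_distrib_right)
  have "dirichlet u u = f_inner k u"
    using generator_u by (simp add: dirichlet_def f_inner_def)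
  also have "\<dots> = f_inner k w"
    using f_inner_add_scaled[of k u "- f_mean u" "\<lambda>_. 1"] \<open>f_mean k = 0\<close>
    by (simp add: w_def f_inner_def f_mean_def)
  finally have "dirichlet u u = f_inner k w" .
  moreover have "dirichlet w w = dirichlet u u" unfolding w_def by (rule dirichlet_add_const)
  moreover have "lam * f_norm2 w \<le> dirichlet w w" by (rule poincare[OF \<open>f_mean w = 0\<close>])
  moreover have "2 * f_inner k w \<le> lam * f_norm2 w + f_norm2 k / lam" by (rule two_f_inner_le[OF \<open>0 < lam\<close>])
  ultimately show ?thesis by linarith
qed

end

section \<open>Asymptotic variance of the TGS estimator\<close>

locale tgs_estimator = tgs +
  fixes h u v :: "bool list \<Rightarrow> real"
  assumes generator_u: "\<And>x. x \<in> states p \<Longrightarrow> generator u x = h x - f_mean h"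
    and generator_v: "\<And>x. x \<in> states p \<Longrightarrow> generator v x = 1 - tgs_Z p f x"
begin

definition err_sum :: "bool list list \<Rightarrow> real" where
  "err_sum ps = path_sum (\<lambda>x. (h x - f_mean h) / tgs_Z p f x) ps"

definition weight_sum :: "bool list list \<Rightarrow> real" where
  "weight_sum ps = path_sum (\<lambda>x. 1 / tgs_Z p f x) ps"

lemma err_sum_eq:
  assumes "ps \<in> paths p n"
  shows "err_sum ps = path_sum (\<lambda>x. u x - P_apply u x) ps"
  unfolding err_sum_def
proof (rule path_sum_cong)
  fix x assume "x \<in> set ps"
  hence "x \<in> \<X>" using paths_in_states[OF assms] by blast
  thus "(h x - f_mean h) / tgs_Z p f x = u x - P_apply u x"
    using generator_u[of x] tgs_Z_pos[of x] by (simp add: generator_def field_simps)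
qed

lemma weight_sum_eq:
  assumes "ps \<in> paths p n"
  shows "weight_sum ps - n = path_sum (\<lambda>x. v x - P_apply v x) ps"
proof -
  have "path_sum (\<lambda>x. v x - P_apply v x) ps = path_sum (\<lambda>x. 1 / tgs_Z p f x - 1) ps"
  proof (rule path_sum_cong)
    fix x assume "x \<in> set ps"
    hence "x \<in> \<X>" using paths_in_states[OF assms] by blast
    thus "v x - P_apply v x = 1 / tgs_Z p f x - 1"
      using generator_v[of x] tgs_Z_pos[of x] by (simp add: generator_def field_simps)
  qed
  thus ?thesis using assms by (simp add: weight_sum_def path_sum_def sum_subtractf paths_def)
qed

lemma weight_sum_bounds:
  assumes "ps \<in> paths p n"
  shows "real n / Z_sum \<le> weight_sum ps" "weight_sum ps \<le> 2 * real n"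
proof -
  have "1 / Z_sum \<le> 1 / tgs_Z p f x \<and> 1 / tgs_Z p f x \<le> 2" if "x \<in> set ps" for x
  proof -
    have "x \<in> \<X>" using paths_in_states[OF assms that] .
    hence "tgs_Z p f x \<le> Z_sum" "1 / 2 \<le> tgs_Z p f x"
      using tgs_Z_le_Z_sum tgs_Z_ge_half by auto
    moreover have "0 < tgs_Z p f x" using tgs_Z_pos \<open>x \<in> \<X>\<close> by blast
    ultimately show ?thesis
      using Z_sum_pos by (auto simp: field_simps intro: divide_left_mono)
  qed
  hence bounds: "1 / Z_sum \<le> 1 / tgs_Z p f (ps ! t) \<and> 1 / tgs_Z p f (ps ! t) \<le> 2"
    if "t < length ps" for t
    using that by simp
  have "(\<Sum>t<length ps. 1 / Z_sum) \<le> (\<Sum>t<length ps. 1 / tgs_Z p f (ps ! t))"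
    by (rule sum_mono) (simp add: bounds)
  moreover have "(\<Sum>t<length ps. 1 / tgs_Z p f (ps ! t)) \<le> (\<Sum>t<length ps. 2)"
    by (rule sum_mono) (simp add: bounds)
  ultimately show "real n / Z_sum \<le> weight_sum ps" "weight_sum ps \<le> 2 * real n"
    using assms by (simp_all add: weight_sum_def path_sum_def paths_def)
qed

lemma tgs_est_eq:
  assumes "ps \<in> paths p n" "1 \<le> n"
  shows "tgs_est p f h ps = f_mean h + err_sum ps / weight_sum ps"
proof -
  have "0 < real n / Z_sum" using Z_sum_pos assms(2) by simp
  hence "0 < weight_sum ps" using weight_sum_bounds(1)[OF assms(1)] by linarith
  moreover have "(\<Sum>t<length ps. h (ps ! t) / tgs_Z p f (ps ! t)) = err_sum ps + f_mean h * weight_sum ps"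
    by (simp add: err_sum_def weight_sum_def path_sum_def diff_divide_distrib sum_subtractf
        sum_distrib_left)
  moreover have "(\<Sum>t<length ps. 1 / tgs_Z p f (ps ! t)) = weight_sum ps"
    by (simp add: weight_sum_def path_sum_def)
  ultimately show ?thesis by (simp add: tgs_est_def field_simps)
qed

definition est_error :: "bool list list \<Rightarrow> real" where
  "est_error ps = err_sum ps / weight_sum ps"

lemma tgs_est_var_eq:
  assumes "1 \<le> n"
  shows "tgs_est_var p f h n = expect n (\<lambda>ps. (est_error ps)^2) - (expect n est_error)^2"
proof -
  have "expect n (\<lambda>ps. (tgs_est p f h ps)^2)
      = expect n (\<lambda>ps. (f_mean h)^2 + 2 * f_mean h * est_error ps + (est_error ps)^2)"
    using assms by (intro path_expect_cong) (simp add: tgs_est_eq est_error_def power2_eq_square algebra_simps)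
  moreover have "expect n (tgs_est p f h) = expect n (\<lambda>ps. f_mean h + est_error ps)"
    using assms by (intro path_expect_cong) (simp add: tgs_est_eq est_error_def)
  ultimately show ?thesis
    using assms by (simp add: tgs_est_var_def path_expect_add path_expect_scaled path_expect_const
        power2_eq_square algebra_simps)
qed

lemma err_sum_pow_eq:
  "1 \<le> n \<Longrightarrow> expect n (\<lambda>ps. (err_sum ps)^k) = expect n (\<lambda>ps. (path_sum (\<lambda>x. u x - P_apply u x) ps)^k)"
  by (intro path_expect_cong) (simp add: err_sum_eq)

lemma weight_sum_sq_eq:
  "1 \<le> n \<Longrightarrow> expect n (\<lambda>ps. (weight_sum ps - n)^2) = expect n (\<lambda>ps. (path_sum (\<lambda>x. v x - P_apply v x) ps)^2)"
  by (intro path_expect_cong) (simp add: weight_sum_eq)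

lemma second_moment_asymp:
  obtains C where "\<And>n. 1 \<le> n \<Longrightarrow>
    \<bar>n * expect n (\<lambda>ps. (est_error ps)^2) - expect n (\<lambda>ps. (err_sum ps)^2) / n\<bar> \<le> C / sqrt n"
proof -
  obtain U where U: "\<And>x. x \<in> \<X> \<Longrightarrow> \<bar>u x\<bar> \<le> U" using exists_abs_bound by blast
  obtain V where V: "\<And>x. x \<in> \<X> \<Longrightarrow> \<bar>v x\<bar> \<le> V" using exists_abs_bound by blast
  obtain C4 where "\<And>n. 1 \<le> n \<Longrightarrow>
      expect n (\<lambda>ps. (path_sum (\<lambda>x. u x - P_apply u x) ps)^4) \<le> C4 * (real n)^2"
    using path_expect_poisson_sum_pow4_le[of u U, OF U] by blast
  hence C4: "\<And>n. 1 \<le> n \<Longrightarrow> expect n (\<lambda>ps. (err_sum ps)^4) \<le> C4 * (real n)^2"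
    by (simp add: err_sum_pow_eq)
  define C where "C = 3 * Z_sum^2 * (C4 / 2 + 8 * V^2)"
  have bound: "\<bar>n * expect n (\<lambda>ps. (est_error ps)^2) - expect n (\<lambda>ps. (err_sum ps)^2) / n\<bar>
      \<le> C / sqrt n" if n: "1 \<le> n" for n
  proof -
    define r where "r = sqrt n"
    have "1 \<le> r" "r * r = n" using n by (simp_all add: r_def)
    have moment: "expect n (\<lambda>ps. \<bar>(err_sum ps)^2 * (weight_sum ps - n)\<bar>) \<le> r * r * r * (C4 / 2 + 8 * V^2)"
    proof -
      have "expect n (\<lambda>ps. \<bar>(err_sum ps)^2 * (weight_sum ps - n)\<bar>)
          \<le> 1 / (2 * r) * expect n (\<lambda>ps. ((err_sum ps)^2)^2) + r / 2 * expect n (\<lambda>ps. (weight_sum ps - n)^2)"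
        using \<open>1 \<le> r\<close> by (intro path_expect_abs_mult_le[OF n]) simp
      also have "\<dots> \<le> 1 / (2 * r) * (C4 * (r * r)^2) + r / 2 * (16 * V^2 * (r * r))"
        using C4[OF n] path_expect_poisson_sum_sq_le[of v V, OF V n] \<open>1 \<le> r\<close> \<open>r * r = n\<close>
        by (intro add_mono mult_left_mono) (simp_all add: weight_sum_sq_eq[OF n] flip: power_mult)
      also have "\<dots> = r * r * r * (C4 / 2 + 8 * V^2)"
        using \<open>1 \<le> r\<close> by (simp add: power2_eq_square field_simps)
      finally show ?thesis .
    qed
    have "\<bar>n * expect n (\<lambda>ps. (est_error ps)^2) - expect n (\<lambda>ps. (err_sum ps)^2) / n\<bar>
        = \<bar>expect n (\<lambda>ps. n * (err_sum ps / weight_sum ps)^2 - (err_sum ps)^2 / n)\<bar>"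
      by (simp add: path_expect_diff path_expect_scaled path_expect_divide est_error_def)
    also have "\<dots> \<le> expect n (\<lambda>ps. 3 * Z_sum^2 / (real n)^2 * \<bar>(err_sum ps)^2 * (weight_sum ps - n)\<bar>)"
      by (rule order_trans[OF abs_path_expect_le[OF n] path_expect_mono[OF n]])
         (use abs_scaled_square_ratio_diff_le[OF _ Z_sum_pos weight_sum_bounds] n in simp)
    also have "\<dots> = 3 * Z_sum^2 / (real n)^2 * expect n (\<lambda>ps. \<bar>(err_sum ps)^2 * (weight_sum ps - n)\<bar>)"
      by (rule path_expect_scaled)
    also have "\<dots> \<le> 3 * Z_sum^2 / (real n)^2 * (r * r * r * (C4 / 2 + 8 * V^2))"
      by (intro mult_left_mono moment) simp
    also have "\<dots> = C / sqrt n"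
      using \<open>1 \<le> r\<close> unfolding C_def r_def[symmetric] \<open>r * r = n\<close>[symmetric]
      by (simp add: power2_eq_square field_simps)
    finally show ?thesis .
  qed
  show ?thesis using bound by (rule that)
qed

lemma expect_err_sum: "1 \<le> n \<Longrightarrow> expect n err_sum = 0"
proof -
  assume n: "1 \<le> n"
  have "(\<Sum>x\<in>\<X>. tgs_stat p f x * ((h x - f_mean h) / tgs_Z p f x)) = (\<Sum>x\<in>\<X>. f x * h x - f x * f_mean h)"
  proof (rule sum.cong[OF refl])
    fix x assume "x \<in> \<X>"
    thus "tgs_stat p f x * ((h x - f_mean h) / tgs_Z p f x) = f x * h x - f x * f_mean h"
      using tgs_Z_pos[of x] by (simp add: tgs_stat_eq field_simps)
  qed
  also have "\<dots> = 0" by (simp add: sum_subtractf sum_f f_mean_def flip: sum_distrib_right)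
  finally show ?thesis
    using path_expect_path_sum[OF n, of "\<lambda>x. (h x - f_mean h) / tgs_Z p f x"]
    by (simp add: err_sum_def[abs_def])
qed

lemma mean_error_bound:
  obtains C where "\<And>n. 1 \<le> n \<Longrightarrow> \<bar>expect n est_error\<bar> \<le> C / n"
proof -
  obtain U where U: "\<And>x. x \<in> \<X> \<Longrightarrow> \<bar>u x\<bar> \<le> U" using exists_abs_bound by blast
  obtain V where V: "\<And>x. x \<in> \<X> \<Longrightarrow> \<bar>v x\<bar> \<le> V" using exists_abs_bound by blast
  have bound: "\<bar>expect n est_error\<bar> \<le> Z_sum * (8 * U^2 + 8 * V^2) / n" if n: "1 \<le> n" for n
  proof -
    (* err_sum is centred, so only the fluctuation of weight_sum around n contributes. *)
    have "expect n est_error = expect n (\<lambda>ps. err_sum ps / weight_sum ps - err_sum ps / n)"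
      using expect_err_sum[OF n] by (simp add: path_expect_diff path_expect_divide est_error_def[abs_def])
    hence "\<bar>expect n est_error\<bar> \<le> expect n (\<lambda>ps. Z_sum / (real n)^2 * \<bar>err_sum ps * (weight_sum ps - n)\<bar>)"
      using n by (auto intro!: order_trans[OF abs_path_expect_le[OF n] path_expect_mono[OF n]]
          simp: abs_ratio_diff_le[OF _ Z_sum_pos weight_sum_bounds(1)])
    also have "\<dots> = Z_sum / (real n)^2 * expect n (\<lambda>ps. \<bar>err_sum ps * (weight_sum ps - n)\<bar>)"
      by (rule path_expect_scaled)
    also have "\<dots> \<le> Z_sum / (real n)^2 * (16 * U^2 * n / 2 + 16 * V^2 * n / 2)"
    proof (intro mult_left_mono)
      have "expect n (\<lambda>ps. \<bar>err_sum ps * (weight_sum ps - n)\<bar>)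
          \<le> 1 / 2 * expect n (\<lambda>ps. (err_sum ps)^2) + 1 / 2 * expect n (\<lambda>ps. (weight_sum ps - n)^2)"
        using path_expect_abs_mult_le[OF n, of 1] by simp
      also have "\<dots> \<le> 1 / 2 * (16 * U^2 * n) + 1 / 2 * (16 * V^2 * n)"
        using path_expect_poisson_sum_sq_le[of u U, OF U n] path_expect_poisson_sum_sq_le[of v V, OF V n]
        by (simp add: err_sum_pow_eq[OF n] weight_sum_sq_eq[OF n] algebra_simps)
      finally show "expect n (\<lambda>ps. \<bar>err_sum ps * (weight_sum ps - n)\<bar>) \<le> 16 * U^2 * n / 2 + 16 * V^2 * n / 2"
        by simp
    qed (use Z_sum_pos in simp)
    also have "\<dots> = Z_sum * (8 * U^2 + 8 * V^2) / n"
      using n by (simp add: power2_eq_square field_simps)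
    finally show ?thesis .
  qed
  show ?thesis using bound by (rule that)
qed

theorem tendsto_n_tgs_est_var: "(\<lambda>n. n * tgs_est_var p f h n) \<longlonglongrightarrow> innovation_var u"
proof -
  obtain U where U: "\<And>x. x \<in> \<X> \<Longrightarrow> \<bar>u x\<bar> \<le> U" using exists_abs_bound by blast
  obtain C1 where C1: "\<And>n. 1 \<le> n \<Longrightarrow>
      \<bar>n * expect n (\<lambda>ps. (est_error ps)^2) - expect n (\<lambda>ps. (err_sum ps)^2) / n\<bar> \<le> C1 / sqrt n"
    using second_moment_asymp by blast
  obtain C2 where "\<And>n. 1 \<le> n \<Longrightarrow> \<bar>expect n (\<lambda>ps. (path_sum (\<lambda>x. u x - P_apply u x) ps)^2)
      - n * innovation_var u\<bar> \<le> C2 * sqrt n"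
    using path_expect_poisson_sum_sq_asymp[of u U, OF U] by blast
  hence C2: "\<And>n. 1 \<le> n \<Longrightarrow>
      \<bar>expect n (\<lambda>ps. (err_sum ps)^2) - n * innovation_var u\<bar> \<le> C2 * sqrt n"
    by (simp add: err_sum_pow_eq)
  obtain C3 where C3: "\<And>n. 1 \<le> n \<Longrightarrow> \<bar>expect n est_error\<bar> \<le> C3 / n"
    using mean_error_bound by blast
  show ?thesis
  proof (rule tendsto_of_abs_diff_le_inverse_sqrt)
    fix n :: nat assume n: "1 \<le> n"
    define r where "r = sqrt n"
    have "1 \<le> r" "r * r = n" using n by (simp_all add: r_def)
    have "\<bar>expect n (\<lambda>ps. (err_sum ps)^2) / n - innovation_var u\<bar> \<le> C2 / r"
    proof -
      have "expect n (\<lambda>ps. (err_sum ps)^2) / n - innovation_var u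
          = (expect n (\<lambda>ps. (err_sum ps)^2) - n * innovation_var u) / n"
        using n by (simp add: field_simps)
      hence "\<bar>expect n (\<lambda>ps. (err_sum ps)^2) / n - innovation_var u\<bar>
          = \<bar>expect n (\<lambda>ps. (err_sum ps)^2) - n * innovation_var u\<bar> / n"
        by (simp add: abs_divide)
      also have "\<dots> \<le> C2 * r / (r * r)"
        using C2[OF n] \<open>r * r = n\<close> n by (simp add: r_def divide_right_mono)
      finally show ?thesis using \<open>1 \<le> r\<close> by simp
    qed
    moreover have "n * (expect n est_error)^2 \<le> C3^2 / r"
    proof -
      have "\<bar>expect n est_error\<bar> \<le> \<bar>C3 / n\<bar>" using C3[OF n] abs_ge_self[of "C3 / n"] by linarith
      hence "(expect n est_error)^2 \<le> (C3 / n)^2" by (simp only: abs_le_square_iff)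
      hence "n * (expect n est_error)^2 \<le> C3^2 / n"
        using n by (simp add: power_divide power2_eq_square field_simps)
      also have "\<dots> \<le> C3^2 / r"
      proof (rule divide_left_mono)
        show "r \<le> n" using \<open>1 \<le> r\<close> \<open>r * r = n\<close> mult_left_mono[of 1 r r] by simp
        show "0 < n * r" using n \<open>1 \<le> r\<close> by simp
      qed simp
      finally show ?thesis .
    qed
    moreover have "n * tgs_est_var p f h n - innovation_var u
        = (n * expect n (\<lambda>ps. (est_error ps)^2) - expect n (\<lambda>ps. (err_sum ps)^2) / n)
          + (expect n (\<lambda>ps. (err_sum ps)^2) / n - innovation_var u) - n * (expect n est_error)^2"
      by (simp add: tgs_est_var_eq[OF n] algebra_simps)
    moreover have "0 \<le> n * (expect n est_error)^2" by simp
    moreover have "\<bar>n * expect n (\<lambda>ps. (est_error ps)^2) - expect n (\<lambda>ps. (err_sum ps)^2) / n\<bar> \<le> C1 / r"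
      using C1[OF n] by (simp add: r_def)
    ultimately have "\<bar>n * tgs_est_var p f h n - innovation_var u\<bar> \<le> C1 / r + C2 / r + C3^2 / r"
      unfolding abs_le_iff by linarith
    thus "\<bar>n * tgs_est_var p f h n - innovation_var u\<bar> \<le> (C1 + C2 + C3^2) / sqrt n"
      by (simp add: r_def add_divide_distrib)
  qed
qed

end

theorem lemma2:
  fixes p :: nat and f h :: "bool list \<Rightarrow> real"
  assumes "p \<ge> 1"
    and "\<forall>g\<in>states p. f g > 0"
    and "(\<Sum>g\<in>states p. f g) = 1"
  shows "convergent (\<lambda>n. real n * tgs_est_var p f h n)
         \<and> tgs_asym_var p f h \<le> 2 * var_f p f h / gap p f"
proof -
  interpret tgs p f using assms by unfold_locales auto
  define k where "k x = h x - f_mean h" for x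
  have "f_mean k = 0"
    by (simp add: k_def f_mean_def right_diff_distrib sum_subtractf sum_f flip: sum_distrib_right)
  then obtain u where u: "\<And>x. x \<in> \<X> \<Longrightarrow> generator u x = k x" using poisson_solvable by blast
  have "f_mean (\<lambda>x. 1 - tgs_Z p f x) = 0"
    by (simp add: f_mean_def right_diff_distrib sum_subtractf sum_f sum_f_mult_tgs_Z)
  then obtain v where v: "\<And>x. x \<in> \<X> \<Longrightarrow> generator v x = 1 - tgs_Z p f x"
    using poisson_solvable by blast
  interpret tgs_estimator p f h u v by unfold_locales (use assms u v in \<open>auto simp: k_def\<close>)
  obtain lam where "0 < lam" "gap p f = lam"
    and poincare: "\<And>w. f_mean w = 0 \<Longrightarrow> lam * f_norm2 w \<le> dirichlet w w"
    using spectral_gap by blast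
  have lim: "(\<lambda>n. real n * tgs_est_var p f h n) \<longlonglongrightarrow> innovation_var u"
    by (rule tendsto_n_tgs_est_var)
  hence "tgs_asym_var p f h = innovation_var u" unfolding tgs_asym_var_def by (rule limI)
  also have "\<dots> \<le> 2 * dirichlet u u" by (rule innovation_var_le_dirichlet)
  also have "\<dots> \<le> 2 * (f_norm2 k / lam)"
    using dirichlet_le_of_poisson[OF u \<open>f_mean k = 0\<close> \<open>0 < lam\<close> poincare] by simp
  also have "\<dots> = 2 * var_f p f h / gap p f"
    by (simp add: var_f_eq_f_norm2 k_def[abs_def] \<open>gap p f = lam\<close>)
  finally show ?thesis using lim by (auto simp: convergent_def)
qed

end
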